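(* Let $T=((\Omega,\mathcal{A}),\{(\Omega,\mathcal{M}_i)\}_{i\in N},\{t_i\}_{i\in N})$ be a type space. The players' beliefs in $T$ are universally consistent if and only if for every finite $I\subseteq N$ and every $I$-common certainty component $S$, the players' beliefs in the induced type space $T_S$ (with player set $I$) are consistent.
   Context: A field on a set $X$ is a collection of subsets of $X$ containing $X$ and closed under complements and finite intersections. For a field $\mathcal{A}$ on $\Omega$, $\mathrm{pba}(\Omega,\mathcal{A})$ is the set of finitely additive nonnegative $P:\mathcal{A}\to\mathbb{R}$ with $P(\Omega)=1$; $B(\Omega,\mathcal{A})$ the sup-norm closure of the linear span of indicators of sets in $\mathcal{A}$; the space of bounded finitely additive set functions carries the weak* topology (weakest making $\mu\mapsto\int f\,d\mu$ continuous for all $f\in B(\Omega,\mathcal{A})$), $\overline{\,\cdot\,}^\ast$ denotes weak* closure. A type space is $((\Omega,\mathcal{A}),\{(\Omega,\mathcal{M}_i)\}_{i\in N},\{t_i\}_{i\in N})$ with $N$ a nonempty set of players, fields $\mathcal{M}_i\subseteq\mathcal{A}$ on a set $\Omega$, and $t_i:\Omega\times\mathcal{A}\to[0,1]$ with: $t_i(\omega,\cdot)\in\mathrm{pba}(\Omega,\mathcal{A})$; $t_i(\cdot,E)\in B(\Omega,\mathcal{M}_i)$ for all $E\in\mathcal{A}$; $t_i(\omega,E)=1$ whenever $E\in\mathcal{M}_i$, $\omega\in E$. For each player $i$, $\Pi_i=\overline{\mathrm{conv}\{t_i(\omega,\cdot):\omega\in\Omega\}}^\ast$ (equivalently the $P\in\mathrm{pba}(\Omega,\mathcal{A})$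 with $P(E\cap F)=\int_F t_i(\cdot,E)\,dP$ for all $E\in\mathcal{A},F\in\mathcal{M}_i$). The players' beliefs in a type space are consistent if $\bigcap_{i\in J}\Pi_i\ne\emptyset$ for every finite set $J$ of its players. For $I\subseteq N$, a nonempty $S\subseteq\Omega$ is an $I$-common certainty component if there is $E\in\mathcal{A}$ with $E\subseteq S$ and $t_i(\omega,E)=1$ for all $\omega\in S$, $i\in I$. The induced type space is $T_S=((S,\mathcal{A}^S),\{(S,\mathcal{M}_i^S)\}_{i\in I},\{t_i^S\}_{i\in I})$ with $\mathcal{A}^S=\{F\cap S:F\in\mathcal{A}\}$, $\mathcal{M}_i^S=\{F\cap S:F\in\mathcal{M}_i\}$, $t_i^S(\omega,F\cap S)=t_i(\omega,F)$ for $\omega\in S$, $F\in\mathcal{A}$. The players' beliefs in $T$ are universally consistent if for every finite $I\subseteq N$ and every $I$-common certainty component $S$ there exists $P\in\bigcap_{i\in I}\Pi_i$ with $\inf\{P(E):E\in\mathcal{A},S\subseteq E\}>0$. *)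

theory Defs
  imports "HOL-Analysis.Analysis"
begin

text \<open>Fields on a set are the library's algebras of sets: "algebra X F".
  Set functions are total functions on sets; a set function on the field A is represented
  extensionally (value 0 outside A).\<close>

definition restrict_sf :: "'w set set \<Rightarrow> ('w set \<Rightarrow> real) \<Rightarrow> 'w set \<Rightarrow> real" where
  "restrict_sf A g = (\<lambda>E. if E \<in> A then g E else 0)"

definition ba :: "'w set \<Rightarrow> 'w set set \<Rightarrow> ('w set \<Rightarrow> real) set" where
  "ba \<Omega> A = {\<mu>. (\<forall>E. E \<notin> A \<longrightarrow> \<mu> E = 0)
      \<and> (\<forall>E\<in>A. \<forall>F\<in>A. E \<inter> F = {} \<longrightarrow> \<mu> (E \<union> F) = \<mu> E + \<mu> F)
      \<and> (\<exists>c. \<forall>E\<in>A. \<bar>\<mu> E\<bar> \<le> c)}"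

definition pba :: "'w set \<Rightarrow> 'w set set \<Rightarrow> ('w set \<Rightarrow> real) set" where
  "pba \<Omega> A = {P. (\<forall>E. E \<notin> A \<longrightarrow> P E = 0)
      \<and> (\<forall>E\<in>A. \<forall>F\<in>A. E \<inter> F = {} \<longrightarrow> P (E \<union> F) = P E + P F)
      \<and> (\<forall>E\<in>A. 0 \<le> P E) \<and> P \<Omega> = 1}"

definition simple_funs :: "'w set \<Rightarrow> 'w set set \<Rightarrow> ('w \<Rightarrow> real) set" where
  "simple_funs \<Omega> A = {f. \<exists>(k::nat) c E. (\<forall>j<k. E j \<in> A)
      \<and> (\<forall>x\<in>\<Omega>. f x = (\<Sum>j<k. c j * indicator (E j) x))}"

definition Bfun :: "'w set \<Rightarrow> 'w set set \<Rightarrow> ('w \<Rightarrow> real) set" where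
  "Bfun \<Omega> A = {f. \<forall>\<epsilon>>0. \<exists>s\<in>simple_funs \<Omega> A. \<forall>x\<in>\<Omega>. \<bar>f x - s x\<bar> < \<epsilon>}"

definition simple_integral :: "'w set \<Rightarrow> 'w set set \<Rightarrow> ('w set \<Rightarrow> real) \<Rightarrow> ('w \<Rightarrow> real) \<Rightarrow> real" where
  "simple_integral \<Omega> A \<mu> f = (THE r. \<exists>(k::nat) c E. (\<forall>j<k. E j \<in> A)
      \<and> (\<forall>x\<in>\<Omega>. f x = (\<Sum>j<k. c j * indicator (E j) x))
      \<and> r = (\<Sum>j<k. c j * \<mu> (E j)))"

definition charge_integral :: "'w set \<Rightarrow> 'w set set \<Rightarrow> ('w set \<Rightarrow> real) \<Rightarrow> ('w \<Rightarrow> real) \<Rightarrow> real" where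
  "charge_integral \<Omega> A \<mu> f = (THE r. \<forall>\<epsilon>>0. \<exists>\<delta>>0. \<forall>s\<in>simple_funs \<Omega> A.
      (\<forall>x\<in>\<Omega>. \<bar>f x - s x\<bar> < \<delta>) \<longrightarrow> \<bar>simple_integral \<Omega> A \<mu> s - r\<bar> < \<epsilon>)"

definition wstar_top :: "'w set \<Rightarrow> 'w set set \<Rightarrow> ('w set \<Rightarrow> real) topology" where
  "wstar_top \<Omega> A = topology_generated_by
     {{\<mu> \<in> ba \<Omega> A. charge_integral \<Omega> A \<mu> f \<in> U} | f U. f \<in> Bfun \<Omega> A \<and> open U}"

definition conv_sf :: "('w set \<Rightarrow> real) set \<Rightarrow> ('w set \<Rightarrow> real) set" where
  "conv_sf K = {\<mu>. \<exists>(k::nat) a p. 0 < k \<and> (\<forall>j<k. 0 \<le> a j \<and> p j \<in> K) \<and> (\<Sum>j<k. a j) = 1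
      \<and> \<mu> = (\<lambda>E. \<Sum>j<k. a j * p j E)}"

definition type_space :: "'w set \<Rightarrow> 'w set set \<Rightarrow> 'i set \<Rightarrow> ('i \<Rightarrow> 'w set set)
    \<Rightarrow> ('i \<Rightarrow> 'w \<Rightarrow> 'w set \<Rightarrow> real) \<Rightarrow> bool" where
  "type_space \<Omega> A N M t \<longleftrightarrow> N \<noteq> {} \<and> algebra \<Omega> A
     \<and> (\<forall>i\<in>N. algebra \<Omega> (M i) \<and> M i \<subseteq> A)
     \<and> (\<forall>i\<in>N. \<forall>\<omega>\<in>\<Omega>. \<forall>E\<in>A. 0 \<le> t i \<omega> E \<and> t i \<omega> E \<le> 1)
     \<and> (\<forall>i\<in>N. \<forall>\<omega>\<in>\<Omega>. restrict_sf A (t i \<omega>) \<in> pba \<Omega> A)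
     \<and> (\<forall>i\<in>N. \<forall>E\<in>A. (\<lambda>\<omega>. t i \<omega> E) \<in> Bfun \<Omega> (M i))
     \<and> (\<forall>i\<in>N. \<forall>E\<in>M i. \<forall>\<omega>\<in>E. t i \<omega> E = 1)"

definition Pi_set :: "'w set \<Rightarrow> 'w set set \<Rightarrow> ('i \<Rightarrow> 'w \<Rightarrow> 'w set \<Rightarrow> real) \<Rightarrow> 'i
    \<Rightarrow> ('w set \<Rightarrow> real) set" where
  "Pi_set \<Omega> A t i = (wstar_top \<Omega> A) closure_of
     (conv_sf {restrict_sf A (t i \<omega>) | \<omega>. \<omega> \<in> \<Omega>})"

definition consistent :: "'w set \<Rightarrow> 'w set set \<Rightarrow> 'i set
    \<Rightarrow> ('i \<Rightarrow> 'w \<Rightarrow> 'w set \<Rightarrow> real) \<Rightarrow> bool" where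
  "consistent \<Omega> A N t \<longleftrightarrow>
     (\<forall>J. finite J \<and> J \<subseteq> N \<longrightarrow> (\<Inter>i\<in>J. Pi_set \<Omega> A t i) \<noteq> {})"

definition common_certainty_component :: "'w set \<Rightarrow> 'w set set
    \<Rightarrow> ('i \<Rightarrow> 'w \<Rightarrow> 'w set \<Rightarrow> real) \<Rightarrow> 'i set \<Rightarrow> 'w set \<Rightarrow> bool" where
  "common_certainty_component \<Omega> A t I S \<longleftrightarrow> S \<noteq> {} \<and> S \<subseteq> \<Omega>
     \<and> (\<exists>E\<in>A. E \<subseteq> S \<and> (\<forall>\<omega>\<in>S. \<forall>i\<in>I. t i \<omega> E = 1))"

text \<open>Induced type space on S: trace fields and t_i^S(\<omega>, F \<inter> S) = t_i(\<omega>, F).\<close>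
definition trace_field :: "'w set set \<Rightarrow> 'w set \<Rightarrow> 'w set set" where
  "trace_field A S = {F \<inter> S | F. F \<in> A}"

definition induced_t :: "'w set set \<Rightarrow> 'w set \<Rightarrow> ('i \<Rightarrow> 'w \<Rightarrow> 'w set \<Rightarrow> real)
    \<Rightarrow> 'i \<Rightarrow> 'w \<Rightarrow> 'w set \<Rightarrow> real" where
  "induced_t A S t i \<omega> G = t i \<omega> (SOME F. F \<in> A \<and> G = F \<inter> S)"

definition universally_consistent :: "'w set \<Rightarrow> 'w set set \<Rightarrow> 'i set
    \<Rightarrow> ('i \<Rightarrow> 'w \<Rightarrow> 'w set \<Rightarrow> real) \<Rightarrow> bool" where
  "universally_consistent \<Omega> A N t \<longleftrightarrow>
     (\<forall>I S. finite I \<and> I \<subseteq> N \<and> common_certainty_component \<Omega> A t I S \<longrightarrow>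
        (\<exists>P\<in>pba \<Omega> A. (\<forall>i\<in>I. P \<in> Pi_set \<Omega> A t i)
            \<and> Inf {P E | E. E \<in> A \<and> S \<subseteq> E} > 0))"

end

(*
  Both directions go through priors on the trace field of S.  A common prior Q of T_S lifts to
  P F = Q (F \<inter> S), which is a common prior of T because for \<omega> \<in> S the induced type of
  F \<inter> S is the type of F, and which gives probability 1 to every event containing S.

  Conversely, let P be a common prior of the players in I with P F bounded away from 0 on the
  events F containing S, and let E \<subseteq> S be an event of which all players in I are certain on S.
  Approximating t_i(., E) by an M_i-simple function gives an M_i-event W \<supseteq> S on which
  t_i(., E) > 1/2, hence P E \<ge> P W / 2 > 0.  Then Q (F \<inter> S) = P (F | E) is a common prior of T_S:
  cut \<Omega> into finitely many M_i-cells on which every type of i is nearly constant on finitely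
  many given events; since every type is certain of its own cell, P (G \<inter> E \<inter> C) is close to
  P (E \<inter> C) t_i(x_C, G) for a point x_C of E \<inter> C, so the convex combination of the types at the
  x_C with weights P (C | E) is close to P (. | E) on the given events.

  Weak* closures of sets of probabilities are handled through their description by
  approximation on finitely many events.
*)
theory Submission
  imports Defs
begin

definition cond_sf :: "'w set set \<Rightarrow> ('w set \<Rightarrow> real) \<Rightarrow> 'w set \<Rightarrow> 'w set \<Rightarrow> real" where
  "cond_sf A P E F = (if F \<in> A then P (F \<inter> E) / P E else 0)"

locale fa_probability = algebra \<Omega> A for \<Omega> :: "'w set" and A +
  fixes P :: "'w set \<Rightarrow> real"
  assumes pba: "P \<in> pba \<Omega> A"
begin

lemma prob_additive: "E \<in> A \<Longrightarrow> F \<in> A \<Longrightarrow> E \<inter> F = {} \<Longrightarrow> P (E \<union> F) = P E + P F"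
  using pba unfolding pba_def by blast

lemma prob_nonneg: "E \<in> A \<Longrightarrow> 0 \<le> P E"
  using pba unfolding pba_def by blast

lemma prob_space_1: "P \<Omega> = 1"
  using pba unfolding pba_def by blast

lemma prob_empty: "P {} = 0"
  using prob_additive[of "{}" "{}"] by simp

lemma prob_Int_Diff: "F \<in> A \<Longrightarrow> G \<in> A \<Longrightarrow> P F = P (F \<inter> G) + P (F - G)"
  using prob_additive[of "F \<inter> G" "F - G"] by (simp add: Int_Diff_Un Int_Diff_disjoint Diff Int)

lemma prob_mono: "F \<in> A \<Longrightarrow> G \<in> A \<Longrightarrow> F \<subseteq> G \<Longrightarrow> P F \<le> P G"
  using prob_Int_Diff[of G F] prob_nonneg[of "G - F"] by (simp add: Int_absorb1 Diff)

lemma prob_le_1: "F \<in> A \<Longrightarrow> P F \<le> 1"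
  using prob_mono[of F \<Omega>] sets_into_space prob_space_1 by simp

lemma prob_compl: "F \<in> A \<Longrightarrow> P (\<Omega> - F) = 1 - P F"
  using prob_Int_Diff[of \<Omega> F] prob_space_1 by simp

lemma in_ba: "P \<in> ba \<Omega> A"
proof -
  have "\<forall>E\<in>A. \<bar>P E\<bar> \<le> 1" using prob_nonneg prob_le_1 by simp
  then show ?thesis using pba unfolding pba_def ba_def by blast
qed

lemma prob_sum_disjoint:
  assumes "finite \<C>" "\<C> \<subseteq> A" "disjoint \<C>" "Y \<in> A" "Y \<subseteq> \<Union>\<C>"
  shows "P Y = (\<Sum>C\<in>\<C>. P (Y \<inter> C))"
  using assms
proof (induction \<C> arbitrary: Y rule: finite_induct)
  case empty
  then show ?case using prob_empty by simp
next
  case (insert C \<C>)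
  have C: "C \<in> A" "\<C> \<subseteq> A" using insert.prems(1) by auto
  have disj: "disjoint \<C>" "\<And>C'. C' \<in> \<C> \<Longrightarrow> C \<inter> C' = {}"
    using insert.prems(2) insert.hyps(2) unfolding pairwise_insert by (auto simp: disjnt_def)
  have "P (Y - C) = (\<Sum>C'\<in>\<C>. P ((Y - C) \<inter> C'))"
    using insert.IH[OF C(2) disj(1)] C insert.prems(3,4) by blast
  also have "\<dots> = (\<Sum>C'\<in>\<C>. P (Y \<inter> C'))"
    using disj(2) by (intro sum.cong refl arg_cong[where f = P]) blast
  finally show ?case
    using prob_Int_Diff[OF insert.prems(3) C(1)] insert.hyps by simp
qed

lemma sum_prob_disjoint_le_1:
  assumes "finite \<C>" "\<C> \<subseteq> A" "disjoint \<C>"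
  shows "(\<Sum>C\<in>\<C>. P C) \<le> 1"
proof -
  have U: "\<Union>\<C> \<in> A" using assms by blast
  have "P (\<Union>\<C>) = (\<Sum>C\<in>\<C>. P (\<Union>\<C> \<inter> C))"
    using prob_sum_disjoint[OF assms U] by blast
  also have "\<dots> = (\<Sum>C\<in>\<C>. P C)"
    by (intro sum.cong) (auto simp: Int_absorb1 Union_upper)
  finally show ?thesis using prob_le_1[OF U] by simp
qed

lemma prob_Int_approx:
  assumes "G \<in> A" "E \<in> A" "0 \<le> r" "r \<le> 1"
  shows "\<bar>P (G \<inter> E) - P E * r\<bar> \<le> \<bar>P G - r\<bar> + (1 - P E)"
proof -
  have "P (G - E) \<le> P (\<Omega> - E)"
    using assms sets_into_space by (intro prob_mono) auto
  then have "0 \<le> P (G - E)" "P (G - E) \<le> 1 - P E"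
    using assms prob_nonneg[of "G - E"] prob_compl by auto
  moreover have "0 \<le> (1 - P E) * r" "(1 - P E) * r \<le> 1 - P E"
    using assms prob_le_1 by (auto simp: mult_left_le)
  moreover have "P G = P (G \<inter> E) + P (G - E)" using assms prob_Int_Diff by blast
  ultimately show ?thesis
    by (simp add: abs_le_iff algebra_simps)
qed

lemma prob_Int_certain:
  assumes "C \<in> A" "P C = 1" "Y \<in> A"
  shows "P (Y \<inter> C) = P Y"
proof -
  have "P (Y - C) \<le> P (\<Omega> - C)" using assms sets_into_space by (intro prob_mono) auto
  then have "P (Y - C) = 0" using assms prob_compl prob_nonneg[of "Y - C"] by auto
  then show ?thesis using prob_Int_Diff[OF assms(3,1)] by simp
qed

lemma prob_Int_null:
  assumes "C \<in> A" "P C = 0" "Y \<in> A"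
  shows "P (Y \<inter> C) = 0"
proof -
  have "Y \<inter> C \<in> A" using assms by blast
  then show ?thesis using prob_mono[of "Y \<inter> C" C] prob_nonneg[of "Y \<inter> C"] assms by auto
qed

lemma prob_conditional_sum_approx:
  assumes \<C>: "finite \<C>" "\<C> \<subseteq> A" "disjoint \<C>" and E: "E \<in> A" "E \<subseteq> \<Union>\<C>" "0 < P E" and G: "G \<in> A"
  shows "\<bar>(\<Sum>C\<in>\<C>. P (E \<inter> C) / P E * r C) - P (G \<inter> E) / P E\<bar>
    \<le> (\<Sum>C\<in>\<C>. \<bar>P (G \<inter> E \<inter> C) - P (E \<inter> C) * r C\<bar>) / P E"
proof -
  have "P (G \<inter> E) = (\<Sum>C\<in>\<C>. P (G \<inter> E \<inter> C))"
    using prob_sum_disjoint[OF \<C>, of "G \<inter> E"] E G by blast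
  then have "(\<Sum>C\<in>\<C>. P (E \<inter> C) / P E * r C) - P (G \<inter> E) / P E
      = - (\<Sum>C\<in>\<C>. P (G \<inter> E \<inter> C) - P (E \<inter> C) * r C) / P E"
    by (simp add: sum_subtractf sum_divide_distrib diff_divide_distrib)
  also have "\<bar>\<dots>\<bar> \<le> (\<Sum>C\<in>\<C>. \<bar>P (G \<inter> E \<inter> C) - P (E \<inter> C) * r C\<bar>) / P E"
    using E(3) by (simp add: divide_right_mono sum_abs)
  finally show ?thesis .
qed

lemma cond_sf_pba:
  assumes "E \<in> A" "0 < P E"
  shows "cond_sf A P E \<in> pba \<Omega> A"
  unfolding pba_def
proof (intro CollectI conjI allI impI ballI)
  fix F G assume FG: "F \<in> A" "G \<in> A" "F \<inter> G = {}"
  then have "P ((F \<union> G) \<inter> E) = P (F \<inter> E) + P (G \<inter> E)"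
    using prob_additive[of "F \<inter> E" "G \<inter> E"] assms(1) by (auto simp: Int_Un_distrib2)
  then show "cond_sf A P E (F \<union> G) = cond_sf A P E F + cond_sf A P E G"
    unfolding cond_sf_def using FG Un by (simp add: add_divide_distrib)
next
  show "cond_sf A P E \<Omega> = 1" unfolding cond_sf_def using assms by simp
next
  show "0 \<le> cond_sf A P E F" if "F \<in> A" for F
    unfolding cond_sf_def using that assms prob_nonneg[OF Int[OF that assms(1)]] by simp
qed (simp add: cond_sf_def)

end

lemma fa_probabilityI: "algebra \<Omega> A \<Longrightarrow> P \<in> pba \<Omega> A \<Longrightarrow> fa_probability \<Omega> A P"
  by (simp add: fa_probability_def fa_probability_axioms_def)

lemma pba_imp_ba: "algebra \<Omega> A \<Longrightarrow> P \<in> pba \<Omega> A \<Longrightarrow> P \<in> ba \<Omega> A"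
  using fa_probability.in_ba fa_probabilityI by blast

lemma dirac_pba:
  assumes "algebra \<Omega> A" "x \<in> \<Omega>"
  shows "(\<lambda>F. if F \<in> A \<and> x \<in> F then 1 else 0) \<in> pba \<Omega> A"
proof -
  interpret algebra \<Omega> A by fact
  show ?thesis using assms(2) unfolding pba_def by auto
qed

section \<open>Integrals of bounded functions against charges\<close>

lemma ba_additive: "\<mu> \<in> ba \<Omega> A \<Longrightarrow> additive A \<mu>"
  unfolding ba_def additive_def by blast

lemma ba_bounded: "\<mu> \<in> ba \<Omega> A \<Longrightarrow> \<exists>C. \<forall>E\<in>A. \<bar>\<mu> E\<bar> \<le> C"
  unfolding ba_def by blast

definition below_variation :: "'w set set \<Rightarrow> ('w set \<Rightarrow> real) \<Rightarrow> real \<Rightarrow> 'w set \<Rightarrow> real \<Rightarrow> bool" where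
  "below_variation A \<mu> M D r \<longleftrightarrow> (\<exists>P\<in>A. \<exists>N\<in>A. P \<subseteq> D \<and> N \<subseteq> D \<and> r \<le> M * (\<mu> P - \<mu> N))"

lemma below_variation_const:
  assumes "algebra \<Omega> A" "additive A \<mu>" "D \<in> A" "D \<noteq> {} \<Longrightarrow> \<bar>a\<bar> \<le> M"
  shows "below_variation A \<mu> M D (a * \<mu> D)"
proof -
  interpret algebra \<Omega> A by fact
  have empty: "\<mu> {} = 0" using additiveD[OF assms(2), of "{}" "{}"] by simp
  have "a * \<mu> D \<le> M * \<bar>\<mu> D\<bar>"
  proof (cases "D = {}")
    case False
    have "a * \<mu> D \<le> \<bar>a\<bar> * \<bar>\<mu> D\<bar>" by (metis abs_ge_self abs_mult)
    also have "\<dots> \<le> M * \<bar>\<mu> D\<bar>" using assms(4)[OF False] by (rule mult_right_mono) simp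
    finally show ?thesis .
  qed (simp add: empty)
  then show ?thesis
  proof (cases "0 \<le> \<mu> D")
    case True
    then show ?thesis using \<open>a * \<mu> D \<le> M * \<bar>\<mu> D\<bar>\<close> empty assms(3)
      unfolding below_variation_def by (intro bexI[of _ D] bexI[of _ "{}"]) auto
  next
    case False
    then show ?thesis using \<open>a * \<mu> D \<le> M * \<bar>\<mu> D\<bar>\<close> empty assms(3)
      unfolding below_variation_def by (intro bexI[of _ "{}"] bexI[of _ D]) auto
  qed
qed

lemma below_variation_Un:
  assumes "algebra \<Omega> A" "additive A \<mu>" "D1 \<inter> D2 = {}"
    and "below_variation A \<mu> M D1 r1" "below_variation A \<mu> M D2 r2"
  shows "below_variation A \<mu> M (D1 \<union> D2) (r1 + r2)"
proof -
  interpret algebra \<Omega> A by fact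
  obtain P1 N1 P2 N2 where PN: "P1 \<in> A" "N1 \<in> A" "P1 \<subseteq> D1" "N1 \<subseteq> D1" "r1 \<le> M * (\<mu> P1 - \<mu> N1)"
    "P2 \<in> A" "N2 \<in> A" "P2 \<subseteq> D2" "N2 \<subseteq> D2" "r2 \<le> M * (\<mu> P2 - \<mu> N2)"
    using assms(4,5) unfolding below_variation_def by blast
  have "P1 \<inter> P2 = {}" "N1 \<inter> N2 = {}" using PN(3,4,8,9) assms(3) by blast+
  then have "\<mu> (P1 \<union> P2) = \<mu> P1 + \<mu> P2" "\<mu> (N1 \<union> N2) = \<mu> N1 + \<mu> N2"
    using additiveD[OF assms(2)] PN(1,2,6,7) by simp_all
  then have "r1 + r2 \<le> M * (\<mu> (P1 \<union> P2) - \<mu> (N1 \<union> N2))"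
    using PN(5,10) by (simp add: algebra_simps)
  moreover have "P1 \<union> P2 \<in> A" "N1 \<union> N2 \<in> A" "P1 \<union> P2 \<subseteq> D1 \<union> D2" "N1 \<union> N2 \<subseteq> D1 \<union> D2"
    using PN by auto
  ultimately show ?thesis unfolding below_variation_def by blast
qed

lemma below_variation_simple_sum:
  fixes \<mu> :: "'w set \<Rightarrow> real" and k :: nat
  assumes "algebra \<Omega> A" "additive A \<mu>" "\<forall>j<k. E j \<in> A" "D \<in> A"
    and "\<forall>x\<in>D. \<bar>a + (\<Sum>j<k. c j * indicator (E j) x)\<bar> \<le> M"
  shows "below_variation A \<mu> M D (a * \<mu> D + (\<Sum>j<k. c j * \<mu> (E j \<inter> D)))"
  using assms(3-5)
proof (induction k arbitrary: D a)
  case 0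
  then show ?case using below_variation_const[OF assms(1,2), of D a M] by auto
next
  case (Suc k)
  interpret algebra \<Omega> A by fact
  let ?D1 = "D \<inter> E k" and ?D2 = "D - E k"
  have Ek: "E k \<in> A" and Ej: "\<forall>j<k. E j \<in> A" using Suc.prems(1) by auto
  have D12: "?D1 \<in> A" "?D2 \<in> A" using Ek Suc.prems(2) by auto
  have split: "\<mu> X = \<mu> (X \<inter> E k) + \<mu> (X - E k)" if "X \<in> A" for X
    using additiveD[OF assms(2) _ Int[OF that Ek] Diff[OF that Ek]] by (simp add: Int_Diff_Un Int_Diff_disjoint)
  have "\<forall>x\<in>?D1. \<bar>(a + c k) + (\<Sum>j<k. c j * indicator (E j) x)\<bar> \<le> M"
    "\<forall>x\<in>?D2. \<bar>a + (\<Sum>j<k. c j * indicator (E j) x)\<bar> \<le> M"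
    using Suc.prems(3) by (auto simp: add.assoc add.left_commute)
  then have "below_variation A \<mu> M (?D1 \<union> ?D2)
      (((a + c k) * \<mu> ?D1 + (\<Sum>j<k. c j * \<mu> (E j \<inter> ?D1))) + (a * \<mu> ?D2 + (\<Sum>j<k. c j * \<mu> (E j \<inter> ?D2))))"
    using Suc.IH[OF Ej D12(1)] Suc.IH[OF Ej D12(2)] by (intro below_variation_Un[OF assms(1,2)]) auto
  moreover have "\<mu> (E j \<inter> D) = \<mu> (E j \<inter> ?D1) + \<mu> (E j \<inter> ?D2)" if "j < k" for j
  proof -
    have "E j \<inter> D \<in> A" using Ej that Suc.prems(2) by blast
    then show ?thesis using split[of "E j \<inter> D"] by (simp add: Int_assoc Int_Diff)
  qed
  then have "(\<Sum>j<k. c j * \<mu> (E j \<inter> D))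
      = (\<Sum>j<k. c j * \<mu> (E j \<inter> ?D1)) + (\<Sum>j<k. c j * \<mu> (E j \<inter> ?D2))"
    by (simp add: distrib_left sum.distrib)
  moreover have "E k \<inter> D = ?D1" "?D1 \<union> ?D2 = D" by blast+
  ultimately show ?case
    using split[OF Suc.prems(2)] by (simp add: algebra_simps)
qed

lemma ba_simple_sum_abs_le:
  fixes \<mu> :: "'w set \<Rightarrow> real" and k :: nat
  assumes alg: "algebra \<Omega> A" and \<mu>: "\<mu> \<in> ba \<Omega> A" and C: "\<forall>E\<in>A. \<bar>\<mu> E\<bar> \<le> C"
    and E: "\<forall>j<k. E j \<in> A" and M: "0 \<le> M"
    and bound: "\<forall>x\<in>\<Omega>. \<bar>\<Sum>j<k. c j * indicator (E j) x\<bar> \<le> M"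
  shows "\<bar>\<Sum>j<k. c j * \<mu> (E j)\<bar> \<le> 2 * C * M"
proof -
  interpret algebra \<Omega> A by fact
  have E_Int: "E j \<inter> \<Omega> = E j" if "j < k" for j
    using E that sets_into_space by blast
  have le: "(\<Sum>j<k. c j * \<mu> (E j)) \<le> 2 * C * M"
    if bound': "\<forall>x\<in>\<Omega>. \<bar>\<Sum>j<k. c j * indicator (E j) x\<bar> \<le> M" for c
  proof -
    obtain P N where "P \<in> A" "N \<in> A" "0 * \<mu> \<Omega> + (\<Sum>j<k. c j * \<mu> (E j \<inter> \<Omega>)) \<le> M * (\<mu> P - \<mu> N)"
      using below_variation_simple_sum[OF alg ba_additive[OF \<mu>] E top, of 0 c M] bound'
      unfolding below_variation_def by auto
    moreover have "\<mu> P \<le> C" "- \<mu> N \<le> C" using C calculation(1,2) by (auto simp: abs_le_iff)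
    then have "M * (\<mu> P - \<mu> N) \<le> M * (2 * C)" using M by (intro mult_left_mono) auto
    ultimately show ?thesis using E_Int by (simp add: mult.commute)
  qed
  have "(\<Sum>j<k. - c j * \<mu> (E j)) \<le> 2 * C * M"
    using bound by (intro le) (simp add: sum_negf)
  then show ?thesis using le[OF bound] by (simp add: sum_negf)
qed

lemma sum_lessThan_add: "(\<Sum>j<k + k'. f j) = (\<Sum>j<k. f j) + (\<Sum>j<k'. f (k + j))"
  for f :: "nat \<Rightarrow> 'a::comm_monoid_add"
  by (induct k') (simp_all add: add.assoc)

lemma simple_representation_diff:
  fixes k k' :: nat and c c' :: "nat \<Rightarrow> real" and E E' :: "nat \<Rightarrow> 'a"
  assumes "\<forall>j<k. E j \<in> A" "\<forall>j<k'. E' j \<in> A"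
  obtains k'' :: nat and c'' E'' where "\<forall>j<k''. E'' j \<in> A"
    "\<And>g. (\<Sum>j<k. c j * g (E j)) - (\<Sum>j<k'. c' j * g (E' j)) = (\<Sum>j<k''. c'' j * g (E'' j))"
proof
  define c'' where "c'' j = (if j < k then c j else - c' (j - k))" for j
  define E'' where "E'' j = (if j < k then E j else E' (j - k))" for j
  show "\<forall>j<k + k'. E'' j \<in> A" using assms unfolding E''_def by auto
  fix g :: "'a \<Rightarrow> real"
  have "(\<Sum>j<k + k'. c'' j * g (E'' j)) = (\<Sum>j<k. c'' j * g (E'' j)) + (\<Sum>j<k'. c'' (k + j) * g (E'' (k + j)))"
    by (rule sum_lessThan_add)
  also have "(\<Sum>j<k. c'' j * g (E'' j)) = (\<Sum>j<k. c j * g (E j))"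
    unfolding c''_def E''_def by (intro sum.cong) auto
  also have "(\<Sum>j<k'. c'' (k + j) * g (E'' (k + j))) = - (\<Sum>j<k'. c' j * g (E' j))"
    unfolding c''_def E''_def by (simp add: sum_negf)
  finally show "(\<Sum>j<k. c j * g (E j)) - (\<Sum>j<k'. c' j * g (E' j)) = (\<Sum>j<k + k'. c'' j * g (E'' j))"
    by simp
qed

lemma simple_integral_eq:
  fixes k :: nat and \<mu> :: "'w set \<Rightarrow> real"
  assumes alg: "algebra \<Omega> A" and \<mu>: "\<mu> \<in> ba \<Omega> A"
    and E: "\<forall>j<k. E j \<in> A" and s: "\<forall>x\<in>\<Omega>. s x = (\<Sum>j<k. c j * indicator (E j) x)"
  shows "simple_integral \<Omega> A \<mu> s = (\<Sum>j<k. c j * \<mu> (E j))"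
  unfolding simple_integral_def
proof (rule the_equality)
  show "\<exists>(k'::nat) c' E'. (\<forall>j<k'. E' j \<in> A) \<and> (\<forall>x\<in>\<Omega>. s x = (\<Sum>j<k'. c' j * indicator (E' j) x))
      \<and> (\<Sum>j<k. c j * \<mu> (E j)) = (\<Sum>j<k'. c' j * \<mu> (E' j))"
    using E s by blast
next
  fix r assume "\<exists>(k'::nat) c' E'. (\<forall>j<k'. E' j \<in> A) \<and> (\<forall>x\<in>\<Omega>. s x = (\<Sum>j<k'. c' j * indicator (E' j) x))
      \<and> r = (\<Sum>j<k'. c' j * \<mu> (E' j))"
  then obtain k' :: nat and c' E' where E': "\<forall>j<k'. E' j \<in> A"
    and s': "\<forall>x\<in>\<Omega>. s x = (\<Sum>j<k'. c' j * indicator (E' j) x)" and r: "r = (\<Sum>j<k'. c' j * \<mu> (E' j))"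
    by blast
  obtain k'' :: nat and c'' E'' where E'': "\<forall>j<k''. E'' j \<in> A" and diff:
    "\<And>g. (\<Sum>j<k. c j * g (E j)) - (\<Sum>j<k'. c' j * g (E' j)) = (\<Sum>j<k''. c'' j * g (E'' j))"
    using simple_representation_diff[OF E E'] by metis
  obtain C where C: "\<forall>E\<in>A. \<bar>\<mu> E\<bar> \<le> C" using ba_bounded[OF \<mu>] by blast
  have "\<forall>x\<in>\<Omega>. \<bar>\<Sum>j<k''. c'' j * indicator (E'' j) x\<bar> \<le> 0"
  proof
    fix x assume "x \<in> \<Omega>"
    then show "\<bar>\<Sum>j<k''. c'' j * indicator (E'' j) x\<bar> \<le> 0"
      using diff[of "\<lambda>X. indicator X x"] s s' by simp
  qed
  then have "\<bar>\<Sum>j<k''. c'' j * \<mu> (E'' j)\<bar> \<le> 2 * C * 0"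
    by (intro ba_simple_sum_abs_le[OF alg \<mu> C E'']) auto
  then show "r = (\<Sum>j<k. c j * \<mu> (E j))" using diff[of \<mu>] r by simp
qed

lemma simple_integral_diff_le:
  fixes \<mu> :: "'w set \<Rightarrow> real"
  assumes alg: "algebra \<Omega> A" and \<mu>: "\<mu> \<in> ba \<Omega> A" and C: "\<forall>E\<in>A. \<bar>\<mu> E\<bar> \<le> C"
    and s: "s \<in> simple_funs \<Omega> A" and s': "s' \<in> simple_funs \<Omega> A" and M: "0 \<le> M"
    and bound: "\<forall>x\<in>\<Omega>. \<bar>s x - s' x\<bar> \<le> M"
  shows "\<bar>simple_integral \<Omega> A \<mu> s - simple_integral \<Omega> A \<mu> s'\<bar> \<le> 2 * C * M"
proof -
  obtain k :: nat and c E where E: "\<forall>j<k. E j \<in> A" and rep: "\<forall>x\<in>\<Omega>. s x = (\<Sum>j<k. c j * indicator (E j) x)"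
    using s unfolding simple_funs_def by blast
  obtain k' :: nat and c' E' where E': "\<forall>j<k'. E' j \<in> A"
    and rep': "\<forall>x\<in>\<Omega>. s' x = (\<Sum>j<k'. c' j * indicator (E' j) x)"
    using s' unfolding simple_funs_def by blast
  obtain k'' :: nat and c'' E'' where E'': "\<forall>j<k''. E'' j \<in> A" and diff:
    "\<And>g. (\<Sum>j<k. c j * g (E j)) - (\<Sum>j<k'. c' j * g (E' j)) = (\<Sum>j<k''. c'' j * g (E'' j))"
    using simple_representation_diff[OF E E'] by metis
  have "\<forall>x\<in>\<Omega>. \<bar>\<Sum>j<k''. c'' j * indicator (E'' j) x\<bar> \<le> M"
  proof
    fix x assume x: "x \<in> \<Omega>"
    have "(\<Sum>j<k''. c'' j * indicator (E'' j) x) = s x - s' x"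
      using diff[of "\<lambda>X. indicator X x"] rep rep' x by simp
    then show "\<bar>\<Sum>j<k''. c'' j * indicator (E'' j) x\<bar> \<le> M" using bound x by simp
  qed
  then have "\<bar>\<Sum>j<k''. c'' j * \<mu> (E'' j)\<bar> \<le> 2 * C * M"
    by (rule ba_simple_sum_abs_le[OF alg \<mu> C E'' M])
  then show ?thesis
    using diff[of \<mu>] simple_integral_eq[OF alg \<mu> E rep] simple_integral_eq[OF alg \<mu> E' rep'] by simp
qed

lemma Cauchy_if_dist_le_inverse:
  fixes a :: "nat \<Rightarrow> real"
  assumes K: "0 \<le> K" and dist: "\<And>m n. \<bar>a m - a n\<bar> \<le> K * (inverse (real (Suc m)) + inverse (real (Suc n)))"
  shows "Cauchy a"
proof (rule metric_CauchyI)
  fix e :: real assume e: "0 < e"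
  then have "0 < e / (2 * K + 1)" using K by simp
  then obtain N where N: "inverse (real (Suc N)) < e / (2 * K + 1)"
    using reals_Archimedean by blast
  show "\<exists>N. \<forall>m\<ge>N. \<forall>n\<ge>N. dist (a m) (a n) < e"
  proof (intro exI allI impI)
    fix m n assume m: "m \<ge> N" and n: "n \<ge> N"
    have "inverse (real (Suc m)) \<le> inverse (real (Suc N))" "inverse (real (Suc n)) \<le> inverse (real (Suc N))"
      using m n by (simp_all add: field_simps)
    then have "inverse (real (Suc m)) + inverse (real (Suc n)) \<le> 2 * inverse (real (Suc N))"
      by linarith
    from mult_left_mono[OF this K] dist[of m n]
    have "\<bar>a m - a n\<bar> \<le> 2 * K * inverse (real (Suc N))" by simp
    also have "\<dots> \<le> 2 * K * (e / (2 * K + 1))" using N K by (intro mult_left_mono) auto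
    also have "\<dots> < e" using e K by (simp add: field_simps)
    finally show "dist (a m) (a n) < e" by (simp add: dist_real_def)
  qed
qed

lemma simple_integral_limit:
  fixes \<mu> :: "'w set \<Rightarrow> real"
  assumes alg: "algebra \<Omega> A" and \<mu>: "\<mu> \<in> ba \<Omega> A" and C: "\<forall>E\<in>A. \<bar>\<mu> E\<bar> \<le> C"
    and f: "f \<in> Bfun \<Omega> A"
  obtains r where "\<And>s M. s \<in> simple_funs \<Omega> A \<Longrightarrow> 0 \<le> M \<Longrightarrow> \<forall>x\<in>\<Omega>. \<bar>f x - s x\<bar> \<le> M \<Longrightarrow>
    \<bar>simple_integral \<Omega> A \<mu> s - r\<bar> \<le> 2 * C * M"
proof -
  interpret algebra \<Omega> A by fact
  have C0: "0 \<le> C" using C empty_sets by force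
  have "\<forall>n. \<exists>s\<in>simple_funs \<Omega> A. \<forall>x\<in>\<Omega>. \<bar>f x - s x\<bar> < inverse (real (Suc n))"
    using f unfolding Bfun_def by auto
  then obtain sq where sq: "\<And>n. sq n \<in> simple_funs \<Omega> A"
    "\<And>n x. x \<in> \<Omega> \<Longrightarrow> \<bar>f x - sq n x\<bar> < inverse (real (Suc n))"
    by metis
  define a where "a n = simple_integral \<Omega> A \<mu> (sq n)" for n
  have near: "\<bar>simple_integral \<Omega> A \<mu> s - a n\<bar> \<le> 2 * C * (M + inverse (real (Suc n)))"
    if s: "s \<in> simple_funs \<Omega> A" and M: "0 \<le> M" and b: "\<forall>x\<in>\<Omega>. \<bar>f x - s x\<bar> \<le> M" for s M n
  proof -
    have "\<forall>x\<in>\<Omega>. \<bar>s x - sq n x\<bar> \<le> M + inverse (real (Suc n))"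
    proof
      fix x assume x: "x \<in> \<Omega>"
      have "\<bar>s x - sq n x\<bar> \<le> \<bar>f x - s x\<bar> + \<bar>f x - sq n x\<bar>" by simp
      then show "\<bar>s x - sq n x\<bar> \<le> M + inverse (real (Suc n))" using b sq(2)[OF x, of n] x by fastforce
    qed
    then show ?thesis unfolding a_def
      by (intro simple_integral_diff_le[OF alg \<mu> C s sq(1)]) (auto simp: M)
  qed
  have "Cauchy a"
  proof (rule Cauchy_if_dist_le_inverse)
    show "0 \<le> 2 * C" using C0 by simp
    fix m n
    have "\<forall>x\<in>\<Omega>. \<bar>f x - sq m x\<bar> \<le> inverse (real (Suc m))" using sq(2) by (simp add: less_imp_le)
    then show "\<bar>a m - a n\<bar> \<le> 2 * C * (inverse (real (Suc m)) + inverse (real (Suc n)))"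
      using near[of "sq m" "inverse (real (Suc m))" n] sq(1)[of m] unfolding a_def by simp
  qed
  then obtain r where r: "a \<longlonglongrightarrow> r" using Cauchy_convergent_iff convergent_def by blast
  show ?thesis
  proof (rule that)
    fix s M assume s: "s \<in> simple_funs \<Omega> A" and M: "0 \<le> M" and b: "\<forall>x\<in>\<Omega>. \<bar>f x - s x\<bar> \<le> M"
    have "(\<lambda>n. \<bar>simple_integral \<Omega> A \<mu> s - a n\<bar>) \<longlonglongrightarrow> \<bar>simple_integral \<Omega> A \<mu> s - r\<bar>"
      by (intro tendsto_intros r)
    moreover have "(\<lambda>n. 2 * C * (M + inverse (real (Suc n)))) \<longlonglongrightarrow> 2 * C * (M + 0)"
      by (intro tendsto_intros LIMSEQ_inverse_real_of_nat)
    ultimately show "\<bar>simple_integral \<Omega> A \<mu> s - r\<bar> \<le> 2 * C * M"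
      using LIMSEQ_le near[OF s M b] by fastforce
  qed
qed

lemma charge_integral_eqI:
  fixes \<mu> :: "'w set \<Rightarrow> real"
  assumes C0: "0 \<le> C" and f: "f \<in> Bfun \<Omega> A"
    and r: "\<And>s M. s \<in> simple_funs \<Omega> A \<Longrightarrow> 0 \<le> M \<Longrightarrow> \<forall>x\<in>\<Omega>. \<bar>f x - s x\<bar> \<le> M \<Longrightarrow>
      \<bar>simple_integral \<Omega> A \<mu> s - r\<bar> \<le> 2 * C * M"
  shows "charge_integral \<Omega> A \<mu> f = r"
  unfolding charge_integral_def
proof (rule the_equality)
  have close: "\<bar>simple_integral \<Omega> A \<mu> s - r\<bar> < \<epsilon>"
    if "0 < \<epsilon>" "s \<in> simple_funs \<Omega> A" "\<forall>x\<in>\<Omega>. \<bar>f x - s x\<bar> < \<epsilon> / (2 * C + 1)" for s \<epsilon>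
  proof -
    have "\<bar>simple_integral \<Omega> A \<mu> s - r\<bar> \<le> 2 * C * (\<epsilon> / (2 * C + 1))"
      using that C0 by (intro r) (auto simp: less_imp_le)
    also have "\<dots> < \<epsilon>" using that(1) C0 by (simp add: field_simps)
    finally show ?thesis .
  qed
  show "\<forall>\<epsilon>>0. \<exists>\<delta>>0. \<forall>s\<in>simple_funs \<Omega> A. (\<forall>x\<in>\<Omega>. \<bar>f x - s x\<bar> < \<delta>) \<longrightarrow>
      \<bar>simple_integral \<Omega> A \<mu> s - r\<bar> < \<epsilon>"
  proof (intro allI impI)
    fix \<epsilon> :: real assume "0 < \<epsilon>"
    then show "\<exists>\<delta>>0. \<forall>s\<in>simple_funs \<Omega> A. (\<forall>x\<in>\<Omega>. \<bar>f x - s x\<bar> < \<delta>) \<longrightarrow>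
        \<bar>simple_integral \<Omega> A \<mu> s - r\<bar> < \<epsilon>"
      using close C0 by (intro exI[of _ "\<epsilon> / (2 * C + 1)"]) auto
  qed
  fix r' assume r': "\<forall>\<epsilon>>0. \<exists>\<delta>>0. \<forall>s\<in>simple_funs \<Omega> A. (\<forall>x\<in>\<Omega>. \<bar>f x - s x\<bar> < \<delta>) \<longrightarrow>
      \<bar>simple_integral \<Omega> A \<mu> s - r'\<bar> < \<epsilon>"
  have small: "\<bar>r' - r\<bar> < 2 * \<epsilon>" if e: "0 < \<epsilon>" for \<epsilon>
  proof -
    obtain \<delta> where d: "0 < \<delta>" and hd: "\<forall>s\<in>simple_funs \<Omega> A. (\<forall>x\<in>\<Omega>. \<bar>f x - s x\<bar> < \<delta>) \<longrightarrow>
        \<bar>simple_integral \<Omega> A \<mu> s - r'\<bar> < \<epsilon>"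
      using r' e by blast
    have "0 < min \<delta> (\<epsilon> / (2 * C + 1))" using d e C0 by simp
    then obtain s where s: "s \<in> simple_funs \<Omega> A" and bs: "\<forall>x\<in>\<Omega>. \<bar>f x - s x\<bar> < min \<delta> (\<epsilon> / (2 * C + 1))"
      using f unfolding Bfun_def by blast
    have "\<bar>simple_integral \<Omega> A \<mu> s - r'\<bar> < \<epsilon>" using hd s bs by auto
    moreover have "\<bar>simple_integral \<Omega> A \<mu> s - r\<bar> < \<epsilon>" using close[OF e s] bs by auto
    ultimately show ?thesis by linarith
  qed
  show "r' = r"
  proof (rule ccontr)
    assume "r' \<noteq> r"
    then show False using small[of "\<bar>r' - r\<bar> / 2"] by simp
  qed
qed

lemma charge_integral_approx:
  fixes \<mu> :: "'w set \<Rightarrow> real"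
  assumes alg: "algebra \<Omega> A" and \<mu>: "\<mu> \<in> ba \<Omega> A" and C: "\<forall>E\<in>A. \<bar>\<mu> E\<bar> \<le> C"
    and f: "f \<in> Bfun \<Omega> A" and s: "s \<in> simple_funs \<Omega> A" and M: "0 \<le> M"
    and bound: "\<forall>x\<in>\<Omega>. \<bar>f x - s x\<bar> \<le> M"
  shows "\<bar>charge_integral \<Omega> A \<mu> f - simple_integral \<Omega> A \<mu> s\<bar> \<le> 2 * C * M"
proof -
  interpret algebra \<Omega> A by fact
  have C0: "0 \<le> C" using C empty_sets by force
  obtain r where r: "\<And>s M. s \<in> simple_funs \<Omega> A \<Longrightarrow> 0 \<le> M \<Longrightarrow> \<forall>x\<in>\<Omega>. \<bar>f x - s x\<bar> \<le> M \<Longrightarrow>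
      \<bar>simple_integral \<Omega> A \<mu> s - r\<bar> \<le> 2 * C * M"
    using simple_integral_limit[OF alg \<mu> C f] by blast
  show ?thesis
    using charge_integral_eqI[OF C0 f r] r[OF s M bound] by (simp add: abs_minus_commute)
qed

lemma indicator_simple_fun: "G \<in> A \<Longrightarrow> indicator G \<in> simple_funs \<Omega> A"
  unfolding simple_funs_def
  by (intro CollectI exI[of _ "1::nat"] exI[of _ "\<lambda>_. 1::real"] exI[of _ "\<lambda>_. G"]) auto

lemma simple_fun_Bfun: "s \<in> simple_funs \<Omega> A \<Longrightarrow> s \<in> Bfun \<Omega> A"
  unfolding Bfun_def by force

lemma charge_integral_indicator:
  fixes \<mu> :: "'w set \<Rightarrow> real"
  assumes alg: "algebra \<Omega> A" and \<mu>: "\<mu> \<in> ba \<Omega> A" and G: "G \<in> A"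
  shows "charge_integral \<Omega> A \<mu> (indicator G) = \<mu> G"
proof -
  obtain C where C: "\<forall>E\<in>A. \<bar>\<mu> E\<bar> \<le> C" using ba_bounded[OF \<mu>] by blast
  have "\<bar>charge_integral \<Omega> A \<mu> (indicator G) - simple_integral \<Omega> A \<mu> (indicator G)\<bar> \<le> 2 * C * 0"
    using G by (intro charge_integral_approx[OF alg \<mu> C] simple_fun_Bfun indicator_simple_fun) auto
  moreover have "simple_integral \<Omega> A \<mu> (indicator G) = (\<Sum>j<(1::nat). 1 * \<mu> G)"
    using G by (intro simple_integral_eq[OF alg \<mu>]) auto
  ultimately show ?thesis by simp
qed

section \<open>Weak* closures of sets of probabilities\<close>

definition setwise_closure :: "'w set set \<Rightarrow> ('w set \<Rightarrow> real) set \<Rightarrow> ('w set \<Rightarrow> real) set" where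
  "setwise_closure A X = {\<mu>. \<forall>\<G> \<epsilon>. finite \<G> \<and> \<G> \<subseteq> A \<and> 0 < \<epsilon> \<longrightarrow>
     (\<exists>\<nu>\<in>X. \<forall>G\<in>\<G>. \<bar>\<nu> G - \<mu> G\<bar> < \<epsilon>)}"

lemma setwise_closureD:
  "\<mu> \<in> setwise_closure A X \<Longrightarrow> finite \<G> \<Longrightarrow> \<G> \<subseteq> A \<Longrightarrow> 0 < \<epsilon> \<Longrightarrow> \<exists>\<nu>\<in>X. \<forall>G\<in>\<G>. \<bar>\<nu> G - \<mu> G\<bar> < \<epsilon>"
  unfolding setwise_closure_def by blast

lemma setwise_closureI:
  "(\<And>\<G> \<epsilon>. finite \<G> \<Longrightarrow> \<G> \<subseteq> A \<Longrightarrow> 0 < \<epsilon> \<Longrightarrow> \<exists>\<nu>\<in>X. \<forall>G\<in>\<G>. \<bar>\<nu> G - \<mu> G\<bar> < \<epsilon>)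
   \<Longrightarrow> \<mu> \<in> setwise_closure A X"
  unfolding setwise_closure_def by blast

lemma setwise_closure_le:
  assumes "\<mu> \<in> setwise_closure A X" "E \<in> A" "F \<in> A" "0 \<le> r"
    and "\<And>\<nu>. \<nu> \<in> X \<Longrightarrow> r * \<nu> F \<le> \<nu> E"
  shows "r * \<mu> F \<le> \<mu> E"
proof (rule ccontr)
  define d where "d = (r * \<mu> F - \<mu> E) / (r + 1)"
  assume "\<not> ?thesis"
  then have "0 < d" and d: "(r + 1) * d = r * \<mu> F - \<mu> E" using assms(4) by (simp_all add: d_def)
  then obtain \<nu> where \<nu>: "\<nu> \<in> X" "\<bar>\<nu> E - \<mu> E\<bar> < d" "\<bar>\<nu> F - \<mu> F\<bar> \<le> d"
    using setwise_closureD[OF assms(1), of "{E, F}"] assms(2,3) by (auto intro: less_imp_le)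
  have "r * (\<mu> F - \<nu> F) \<le> r * d"
    using \<nu>(3) assms(4) by (intro mult_left_mono) auto
  then show False
    using assms(5)[OF \<nu>(1)] \<nu>(2) d by (simp add: algebra_simps abs_less_iff)
qed

abbreviation wstar_subbasis :: "'w set \<Rightarrow> 'w set set \<Rightarrow> ('w set \<Rightarrow> real) set set" where
  "wstar_subbasis \<Omega> A \<equiv> {{\<mu> \<in> ba \<Omega> A. charge_integral \<Omega> A \<mu> f \<in> U} | f U. f \<in> Bfun \<Omega> A \<and> open U}"

lemma wstar_subbasisI:
  "f \<in> Bfun \<Omega> A \<Longrightarrow> open U \<Longrightarrow> {\<mu> \<in> ba \<Omega> A. charge_integral \<Omega> A \<mu> f \<in> U} \<in> wstar_subbasis \<Omega> A"
  by (rule CollectI, rule exI[of _ f], rule exI[of _ U]) simp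

lemma ba_in_wstar_subbasis: "ba \<Omega> A \<in> wstar_subbasis \<Omega> A"
proof -
  have "(\<lambda>_. 0) \<in> Bfun \<Omega> A"
    by (intro simple_fun_Bfun) (auto simp: simple_funs_def intro!: exI[of _ "0::nat"])
  moreover have "ba \<Omega> A = {\<mu> \<in> ba \<Omega> A. charge_integral \<Omega> A \<mu> (\<lambda>_. 0) \<in> UNIV}" by simp
  ultimately show ?thesis using wstar_subbasisI[OF _ open_UNIV, of "\<lambda>_. 0" \<Omega> A] by simp
qed

lemma topspace_wstar_top: "topspace (wstar_top \<Omega> A) = ba \<Omega> A"
  unfolding wstar_top_def topology_generated_by_topspace
  using ba_in_wstar_subbasis[of \<Omega> A] by blast

lemma openin_wstar_top_integral:
  "f \<in> Bfun \<Omega> A \<Longrightarrow> open U \<Longrightarrow> openin (wstar_top \<Omega> A) {\<mu> \<in> ba \<Omega> A. charge_integral \<Omega> A \<mu> f \<in> U}"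
  unfolding wstar_top_def openin_topology_generated_by_iff
  by (intro generate_topology_on.Basis wstar_subbasisI)

lemma wstar_closure_subset_setwise_closure:
  assumes alg: "algebra \<Omega> A"
  shows "wstar_top \<Omega> A closure_of X \<subseteq> ba \<Omega> A \<inter> setwise_closure A X"
proof
  fix \<mu> assume \<mu>: "\<mu> \<in> wstar_top \<Omega> A closure_of X"
  then have \<mu>_ba: "\<mu> \<in> ba \<Omega> A" unfolding in_closure_of topspace_wstar_top by (rule conjunct1)
  have "\<exists>\<nu>\<in>X. \<forall>G\<in>\<G>. \<bar>\<nu> G - \<mu> G\<bar> < \<epsilon>" if \<G>: "finite \<G>" "\<G> \<subseteq> A" and \<epsilon>: "0 < \<epsilon>" for \<G> \<epsilon>
  proof -
    define T where "T = (\<Inter>G\<in>\<G>. {\<nu> \<in> ba \<Omega> A. charge_integral \<Omega> A \<nu> (indicator G) \<in> ball (\<mu> G) \<epsilon>})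
      \<inter> topspace (wstar_top \<Omega> A)"
    have "openin (wstar_top \<Omega> A) T"
      unfolding T_def using \<G>
      by (intro openin_INT openin_wstar_top_integral simple_fun_Bfun indicator_simple_fun) auto
    moreover have "\<mu> \<in> T"
      unfolding T_def topspace_wstar_top
      using \<mu>_ba charge_integral_indicator[OF alg \<mu>_ba] \<G>(2) \<epsilon> by auto
    ultimately obtain \<nu> where \<nu>: "\<nu> \<in> X" "\<nu> \<in> T" using \<mu> unfolding in_closure_of by blast
    have "\<bar>\<nu> G - \<mu> G\<bar> < \<epsilon>" if "G \<in> \<G>" for G
    proof -
      have "\<nu> \<in> ba \<Omega> A" "charge_integral \<Omega> A \<nu> (indicator G) \<in> ball (\<mu> G) \<epsilon>"
        using \<nu>(2) that unfolding T_def by auto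
      then show ?thesis
        using charge_integral_indicator[OF alg, of \<nu> G] that \<G>(2)
        by (auto simp: dist_real_def abs_minus_commute)
    qed
    then show ?thesis using \<nu>(1) by blast
  qed
  then show "\<mu> \<in> ba \<Omega> A \<inter> setwise_closure A X"
    using \<mu>_ba by (auto intro: setwise_closureI)
qed

lemma setwise_closure_pba:
  assumes alg: "algebra \<Omega> A" and X: "X \<subseteq> pba \<Omega> A"
    and \<mu>: "\<mu> \<in> ba \<Omega> A" "\<mu> \<in> setwise_closure A X"
  shows "\<mu> \<in> pba \<Omega> A"
proof -
  have nonneg: "0 \<le> \<mu> G" if "G \<in> A" for G
    using setwise_closure_le[OF \<mu>(2) that that order.refl] X that unfolding pba_def by auto
  have "\<bar>\<mu> \<Omega> - 1\<bar> < \<epsilon>" if \<epsilon>: "0 < \<epsilon>" for \<epsilon>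
  proof -
    obtain \<nu> where "\<nu> \<in> X" "\<bar>\<nu> \<Omega> - \<mu> \<Omega>\<bar> < \<epsilon>"
      using setwise_closureD[OF \<mu>(2), of "{\<Omega>}" \<epsilon>] \<epsilon> algebra.top[OF alg] by auto
    moreover have "\<nu> \<Omega> = 1" using X calculation(1) unfolding pba_def by blast
    ultimately show ?thesis by simp
  qed
  then have "\<mu> \<Omega> = 1"
    by (metis less_irrefl zero_less_abs_iff right_minus_eq)
  then show ?thesis using \<mu>(1) nonneg unfolding ba_def pba_def by blast
qed

definition setwise_nhd :: "'w set \<Rightarrow> 'w set set \<Rightarrow> ('w set \<Rightarrow> real) \<Rightarrow> ('w set \<Rightarrow> real) set \<Rightarrow> bool" where
  "setwise_nhd \<Omega> A \<mu> T \<longleftrightarrow> (\<exists>\<G> \<epsilon>. finite \<G> \<and> \<G> \<subseteq> A \<and> 0 < \<epsilon> \<and>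
      (\<forall>\<nu>\<in>pba \<Omega> A. (\<forall>G\<in>\<G>. \<bar>\<nu> G - \<mu> G\<bar> < \<epsilon>) \<longrightarrow> \<nu> \<in> T))"

lemma setwise_nhdI:
  "finite \<G> \<Longrightarrow> \<G> \<subseteq> A \<Longrightarrow> 0 < \<epsilon> \<Longrightarrow>
   (\<And>\<nu>. \<nu> \<in> pba \<Omega> A \<Longrightarrow> \<forall>G\<in>\<G>. \<bar>\<nu> G - \<mu> G\<bar> < \<epsilon> \<Longrightarrow> \<nu> \<in> T) \<Longrightarrow> setwise_nhd \<Omega> A \<mu> T"
  unfolding setwise_nhd_def by blast

lemma setwise_nhd_mono: "setwise_nhd \<Omega> A \<mu> T \<Longrightarrow> T \<subseteq> T' \<Longrightarrow> setwise_nhd \<Omega> A \<mu> T'"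
  unfolding setwise_nhd_def by blast

lemma setwise_nhd_Int:
  assumes "setwise_nhd \<Omega> A \<mu> T1" "setwise_nhd \<Omega> A \<mu> T2"
  shows "setwise_nhd \<Omega> A \<mu> (T1 \<inter> T2)"
proof -
  obtain \<G>1 \<epsilon>1 where 1: "finite \<G>1" "\<G>1 \<subseteq> A" "0 < \<epsilon>1"
      "\<forall>\<nu>\<in>pba \<Omega> A. (\<forall>G\<in>\<G>1. \<bar>\<nu> G - \<mu> G\<bar> < \<epsilon>1) \<longrightarrow> \<nu> \<in> T1"
    using assms(1) unfolding setwise_nhd_def by blast
  obtain \<G>2 \<epsilon>2 where 2: "finite \<G>2" "\<G>2 \<subseteq> A" "0 < \<epsilon>2"
      "\<forall>\<nu>\<in>pba \<Omega> A. (\<forall>G\<in>\<G>2. \<bar>\<nu> G - \<mu> G\<bar> < \<epsilon>2) \<longrightarrow> \<nu> \<in> T2"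
    using assms(2) unfolding setwise_nhd_def by blast
  show ?thesis
  proof (rule setwise_nhdI[of "\<G>1 \<union> \<G>2" A "min \<epsilon>1 \<epsilon>2"])
    show "finite (\<G>1 \<union> \<G>2)" "\<G>1 \<union> \<G>2 \<subseteq> A" "0 < min \<epsilon>1 \<epsilon>2" using 1 2 by auto
    fix \<nu> assume "\<nu> \<in> pba \<Omega> A" "\<forall>G\<in>\<G>1 \<union> \<G>2. \<bar>\<nu> G - \<mu> G\<bar> < min \<epsilon>1 \<epsilon>2"
    then show "\<nu> \<in> T1 \<inter> T2" using 1(4) 2(4) by simp
  qed
qed

text \<open>The bound of charge_integral_approx is uniform over probabilities, so the integral of
  f against a probability is controlled by its values on the finitely many sets of a simple
  approximation of f.\<close>
lemma setwise_nhd_wstar_subbasis: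
  assumes alg: "algebra \<Omega> A" and f: "f \<in> Bfun \<Omega> A" and U: "open U"
    and \<mu>: "\<mu> \<in> pba \<Omega> A" and \<mu>U: "charge_integral \<Omega> A \<mu> f \<in> U"
  shows "setwise_nhd \<Omega> A \<mu> {\<mu> \<in> ba \<Omega> A. charge_integral \<Omega> A \<mu> f \<in> U}"
proof -
  obtain \<eta> where \<eta>: "0 < \<eta>" "ball (charge_integral \<Omega> A \<mu> f) \<eta> \<subseteq> U" using openE[OF U \<mu>U] by blast
  have "0 < \<eta> / 8" using \<eta>(1) by simp
  then obtain s where s: "s \<in> simple_funs \<Omega> A" "\<forall>x\<in>\<Omega>. \<bar>f x - s x\<bar> < \<eta> / 8"
    using f unfolding Bfun_def by blast
  then obtain k :: nat and c E where E: "\<forall>j<k. E j \<in> A" and rep: "\<forall>x\<in>\<Omega>. s x = (\<Sum>j<k. c j * indicator (E j) x)"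
    unfolding simple_funs_def by blast
  define S where "S = (\<Sum>j<k. \<bar>c j\<bar>)"
  have S0: "0 \<le> S" unfolding S_def by (simp add: sum_nonneg)
  define \<epsilon> where "\<epsilon> = \<eta> / (4 * (S + 1))"
  have \<epsilon>0: "0 < \<epsilon>" unfolding \<epsilon>_def using \<eta> S0 by simp
  have near: "\<bar>charge_integral \<Omega> A \<nu> f - (\<Sum>j<k. c j * \<nu> (E j))\<bar> \<le> \<eta> / 4" if \<nu>: "\<nu> \<in> pba \<Omega> A" for \<nu>
  proof -
    interpret fa_probability \<Omega> A \<nu> using alg \<nu> by (rule fa_probabilityI)
    have "\<forall>E\<in>A. \<bar>\<nu> E\<bar> \<le> 1" using prob_nonneg prob_le_1 by simp
    then have "\<bar>charge_integral \<Omega> A \<nu> f - simple_integral \<Omega> A \<nu> s\<bar> \<le> 2 * 1 * (\<eta> / 8)"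
      using s \<eta>(1) by (intro charge_integral_approx[OF alg in_ba _ f s(1)]) (auto intro: less_imp_le)
    then show ?thesis using simple_integral_eq[OF alg in_ba E rep] by simp
  qed
  show ?thesis
  proof (rule setwise_nhdI[of "E ` {..<k}" A \<epsilon>])
    show "finite (E ` {..<k})" "E ` {..<k} \<subseteq> A" "0 < \<epsilon>" using E \<epsilon>0 by auto
    fix \<nu> assume \<nu>: "\<nu> \<in> pba \<Omega> A" and close: "\<forall>G\<in>E ` {..<k}. \<bar>\<nu> G - \<mu> G\<bar> < \<epsilon>"
    have "\<bar>(\<Sum>j<k. c j * \<nu> (E j)) - (\<Sum>j<k. c j * \<mu> (E j))\<bar> = \<bar>\<Sum>j<k. c j * (\<nu> (E j) - \<mu> (E j))\<bar>"
      by (simp add: sum_subtractf right_diff_distrib)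
    also have "\<dots> \<le> (\<Sum>j<k. \<bar>c j * (\<nu> (E j) - \<mu> (E j))\<bar>)" by (rule sum_abs)
    also have "\<dots> \<le> (\<Sum>j<k. \<bar>c j\<bar> * \<epsilon>)"
      using close unfolding abs_mult by (intro sum_mono mult_left_mono) (auto intro: less_imp_le)
    also have "\<dots> = S * \<epsilon>" unfolding S_def by (simp add: sum_distrib_right)
    also have "\<dots> = \<eta> / 4 * (S / (S + 1))" unfolding \<epsilon>_def using S0 by (simp add: field_simps)
    also have "\<dots> \<le> \<eta> / 4" using S0 \<eta>(1) by (intro mult_left_le) auto
    finally have "\<bar>charge_integral \<Omega> A \<nu> f - charge_integral \<Omega> A \<mu> f\<bar> < \<eta>"
      using near[OF \<nu>] near[OF \<mu>] \<eta>(1) by linarith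
    then have "charge_integral \<Omega> A \<nu> f \<in> U" using \<eta>(2) by (auto simp: dist_real_def abs_minus_commute)
    moreover have "\<nu> \<in> ba \<Omega> A" using alg \<nu> by (rule pba_imp_ba)
    ultimately show "\<nu> \<in> {\<mu> \<in> ba \<Omega> A. charge_integral \<Omega> A \<mu> f \<in> U}" by simp
  qed
qed

lemma openin_wstar_setwise_nhd:
  assumes alg: "algebra \<Omega> A" and T: "openin (wstar_top \<Omega> A) T" "\<mu> \<in> T" and \<mu>: "\<mu> \<in> pba \<Omega> A"
  shows "setwise_nhd \<Omega> A \<mu> T"
proof -
  have "generate_topology_on (wstar_subbasis \<Omega> A) T"
    using T(1) unfolding wstar_top_def openin_topology_generated_by_iff .
  then have "\<forall>\<mu>\<in>T. \<mu> \<in> pba \<Omega> A \<longrightarrow> setwise_nhd \<Omega> A \<mu> T"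
  proof (induction rule: generate_topology_on.induct)
    case Empty
    then show ?case by simp
  next
    case (Int a b)
    then show ?case using setwise_nhd_Int by blast
  next
    case (UN K)
    then show ?case by (meson UnionE Union_upper setwise_nhd_mono)
  next
    case (Basis s)
    then obtain f U where "s = {\<mu> \<in> ba \<Omega> A. charge_integral \<Omega> A \<mu> f \<in> U}" "f \<in> Bfun \<Omega> A" "open U"
      by blast
    then show ?case using setwise_nhd_wstar_subbasis[OF alg] by simp
  qed
  then show ?thesis using T(2) \<mu> by blast
qed

lemma wstar_closure_pba_eq:
  assumes alg: "algebra \<Omega> A" and X: "X \<subseteq> pba \<Omega> A"
  shows "wstar_top \<Omega> A closure_of X = pba \<Omega> A \<inter> setwise_closure A X"
proof
  show "wstar_top \<Omega> A closure_of X \<subseteq> pba \<Omega> A \<inter> setwise_closure A X"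
    using wstar_closure_subset_setwise_closure[OF alg] setwise_closure_pba[OF alg X] by blast
  show "pba \<Omega> A \<inter> setwise_closure A X \<subseteq> wstar_top \<Omega> A closure_of X"
  proof
    fix \<mu> assume \<mu>: "\<mu> \<in> pba \<Omega> A \<inter> setwise_closure A X"
    have "\<exists>\<nu>. \<nu> \<in> X \<and> \<nu> \<in> T" if T: "\<mu> \<in> T" "openin (wstar_top \<Omega> A) T" for T
    proof -
      obtain \<G> \<epsilon> where \<G>: "finite \<G>" "\<G> \<subseteq> A" "0 < \<epsilon>"
          "\<forall>\<nu>\<in>pba \<Omega> A. (\<forall>G\<in>\<G>. \<bar>\<nu> G - \<mu> G\<bar> < \<epsilon>) \<longrightarrow> \<nu> \<in> T"
        using openin_wstar_setwise_nhd[OF alg T(2,1)] \<mu> unfolding setwise_nhd_def by blast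
      moreover obtain \<nu> where "\<nu> \<in> X" "\<forall>G\<in>\<G>. \<bar>\<nu> G - \<mu> G\<bar> < \<epsilon>"
        using setwise_closureD[OF _ \<G>(1-3)] \<mu> by blast
      ultimately show ?thesis using X by blast
    qed
    moreover have "\<mu> \<in> topspace (wstar_top \<Omega> A)"
      using \<mu> pba_imp_ba[OF alg] topspace_wstar_top by blast
    ultimately show "\<mu> \<in> wstar_top \<Omega> A closure_of X" unfolding in_closure_of by blast
  qed
qed

section \<open>Level sets of simple and bounded functions\<close>

lemma (in algebra) simple_funs_preimage:
  assumes "s \<in> simple_funs \<Omega> M"
  shows "{x\<in>\<Omega>. R (s x)} \<in> M"
proof -
  obtain k :: nat and c H where H: "\<forall>j<k. H j \<in> M"
    and rep: "\<forall>x\<in>\<Omega>. s x = (\<Sum>j<k. c j * indicator (H j) x)"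
    using assms unfolding simple_funs_def by blast
  have "{x\<in>\<Omega>. R (\<Sum>j<k. c j * indicator (H j) x)} \<in> M" for R
    using H
  proof (induction k arbitrary: R)
    case 0
    then show ?case by (cases "R 0") auto
  next
    case (Suc k)
    have "{x\<in>\<Omega>. R (\<Sum>j<Suc k. c j * indicator (H j) x)} =
        (H k \<inter> {x\<in>\<Omega>. R ((\<Sum>j<k. c j * indicator (H j) x) + c k)}) \<union>
        ({x\<in>\<Omega>. R (\<Sum>j<k. c j * indicator (H j) x)} - H k)"
      by (auto simp: indicator_def)
    moreover have "{x\<in>\<Omega>. R ((\<Sum>j<k. c j * indicator (H j) x) + c k)} \<in> M"
      "{x\<in>\<Omega>. R (\<Sum>j<k. c j * indicator (H j) x)} \<in> M" "H k \<in> M"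
      using Suc.IH[of "\<lambda>v. R (v + c k)"] Suc.IH[of R] Suc.prems by auto
    ultimately show ?case by auto
  qed
  moreover have "{x\<in>\<Omega>. R (s x)} = {x\<in>\<Omega>. R (\<Sum>j<k. c j * indicator (H j) x)}" using rep by auto
  ultimately show ?thesis by simp
qed

lemma simple_funs_finite_range:
  assumes "s \<in> simple_funs \<Omega> M"
  shows "finite (s ` \<Omega>)"
proof -
  obtain k :: nat and c H where rep: "\<forall>x\<in>\<Omega>. s x = (\<Sum>j<k. c j * indicator (H j) x)"
    using assms unfolding simple_funs_def by blast
  have "s x = sum c ({..<k} \<inter> {j. x \<in> H j})" if "x \<in> \<Omega>" for x
    using rep that by (simp add: indicator_def sum.inter_filter if_distrib cong: if_cong)
  then have "s ` \<Omega> \<subseteq> sum c ` Pow {..<k}" by blast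
  then show ?thesis by (rule finite_subset) simp
qed

lemma (in algebra) Bfun_level_set_between:
  assumes "f \<in> Bfun \<Omega> M" "a < b"
  obtains W where "W \<in> M" "{x\<in>\<Omega>. b \<le> f x} \<subseteq> W" "W \<subseteq> {x\<in>\<Omega>. a < f x}"
proof -
  have "0 < (b - a) / 2" using assms(2) by simp
  then obtain s where s: "s \<in> simple_funs \<Omega> M" "\<forall>x\<in>\<Omega>. \<bar>f x - s x\<bar> < (b - a) / 2"
    using assms(1) unfolding Bfun_def by blast
  show ?thesis
  proof (rule that)
    show "{x\<in>\<Omega>. (a + b) / 2 < s x} \<in> M" using s(1) by (rule simple_funs_preimage)
    have bnd: "f x - (b - a) / 2 < s x" "s x < f x + (b - a) / 2" if "x \<in> \<Omega>" for x
    proof -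
      have "\<bar>f x - s x\<bar> < (b - a) / 2" using s(2) that by blast
      then show "f x - (b - a) / 2 < s x" "s x < f x + (b - a) / 2" by (simp_all only: abs_less_iff) linarith+
    qed
    show "{x\<in>\<Omega>. b \<le> f x} \<subseteq> {x\<in>\<Omega>. (a + b) / 2 < s x}"
    proof safe
      fix x assume x: "x \<in> \<Omega>" and "b \<le> f x"
      then show "(a + b) / 2 < s x" using bnd(1)[OF x] by (simp add: field_simps)
    qed
    show "{x\<in>\<Omega>. (a + b) / 2 < s x} \<subseteq> {x\<in>\<Omega>. a < f x}"
    proof safe
      fix x assume x: "x \<in> \<Omega>" and "(a + b) / 2 < s x"
      then show "a < f x" using bnd(2)[OF x] by (simp add: field_simps)
    qed
  qed
qed

text \<open>The cells are the common level sets of simple approximations of the f h.\<close>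
lemma (in algebra) Bfun_oscillation_partition:
  assumes H: "finite H" and f: "\<forall>h\<in>H. f h \<in> Bfun \<Omega> M" and \<delta>: "0 < \<delta>"
  obtains \<C> where "finite \<C>" "\<C> \<subseteq> M" "disjoint \<C>" "\<Union>\<C> = \<Omega>"
    "\<forall>C\<in>\<C>. \<forall>x\<in>C. \<forall>y\<in>C. \<forall>h\<in>H. \<bar>f h x - f h y\<bar> < \<delta>"
proof -
  have "0 < \<delta> / 2" using \<delta> by simp
  then have "\<forall>h\<in>H. \<exists>s\<in>simple_funs \<Omega> M. \<forall>x\<in>\<Omega>. \<bar>f h x - s x\<bar> < \<delta> / 2"
    using f unfolding Bfun_def by blast
  then obtain s where s: "\<And>h. h \<in> H \<Longrightarrow> s h \<in> simple_funs \<Omega> M"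
      "\<And>h x. h \<in> H \<Longrightarrow> x \<in> \<Omega> \<Longrightarrow> \<bar>f h x - s h x\<bar> < \<delta> / 2"
    by metis
  define cell where "cell v = {y\<in>\<Omega>. \<forall>h\<in>H. s h y = v h}" for v
  define \<sigma> where "\<sigma> x = restrict (\<lambda>h. s h x) H" for x
  have cell_\<sigma>: "cell (\<sigma> x) = {y\<in>\<Omega>. \<forall>h\<in>H. s h y = s h x}" for x
    unfolding cell_def \<sigma>_def by simp
  show ?thesis
  proof (rule that[of "cell ` \<sigma> ` \<Omega>"])
    have "\<sigma> ` \<Omega> \<subseteq> PiE H (\<lambda>h. s h ` \<Omega>)" unfolding \<sigma>_def by auto
    moreover have "finite (PiE H (\<lambda>h. s h ` \<Omega>))"
      using H s(1) simple_funs_finite_range by (intro finite_PiE) auto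
    ultimately show "finite (cell ` \<sigma> ` \<Omega>)" by (metis finite_subset finite_imageI)
    have "cell v \<in> M" for v
    proof (cases "H = {}")
      case True
      then show ?thesis unfolding cell_def by simp
    next
      case False
      have "{y\<in>\<Omega>. s h y = v h} \<in> M" if "h \<in> H" for h
        using simple_funs_preimage[OF s(1)[OF that], of "\<lambda>y. y = v h"] by simp
      then show ?thesis
        unfolding cell_def using H False by (intro sets_Collect_finite_All') auto
    qed
    then show "cell ` \<sigma> ` \<Omega> \<subseteq> M" by blast
    show "disjoint (cell ` \<sigma> ` \<Omega>)"
      unfolding disjoint_def cell_\<sigma> image_image by (fastforce simp: disjnt_def)
    show "\<Union>(cell ` \<sigma> ` \<Omega>) = \<Omega>" unfolding image_image cell_\<sigma> by blast
    show "\<forall>C\<in>cell ` \<sigma> ` \<Omega>. \<forall>x\<in>C. \<forall>y\<in>C. \<forall>h\<in>H. \<bar>f h x - f h y\<bar> < \<delta>"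
    proof (clarsimp simp: cell_\<sigma>)
      fix z x y h assume "x \<in> \<Omega>" "y \<in> \<Omega>" "\<forall>h\<in>H. s h x = s h z" "\<forall>h\<in>H. s h y = s h z" "h \<in> H"
      then have "s h x = s h y" "\<bar>f h x - s h x\<bar> < \<delta> / 2" "\<bar>f h y - s h y\<bar> < \<delta> / 2"
        using s(2)[of h x] s(2)[of h y] by simp_all
      then show "\<bar>f h x - f h y\<bar> < \<delta>" unfolding abs_less_iff by linarith
    qed
  qed
qed

lemma conv_sf_subset_pba:
  assumes "K \<subseteq> pba \<Omega> A"
  shows "conv_sf K \<subseteq> pba \<Omega> A"
proof
  fix \<mu> assume "\<mu> \<in> conv_sf K"
  then obtain k :: nat and a p where a: "\<forall>j<k. 0 \<le> a j \<and> p j \<in> K" "(\<Sum>j<k. a j) = 1"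
    and \<mu>: "\<mu> = (\<lambda>E. \<Sum>j<k. a j * p j E)"
    unfolding conv_sf_def by blast
  have p: "p j \<in> pba \<Omega> A" if "j < k" for j using a(1) assms that by auto
  show "\<mu> \<in> pba \<Omega> A" unfolding pba_def
  proof (intro CollectI conjI ballI allI impI)
    show "\<mu> E = 0" if "E \<notin> A" for E using p that unfolding \<mu> pba_def by simp
    show "\<mu> (E \<union> F) = \<mu> E + \<mu> F" if "E \<in> A" "F \<in> A" "E \<inter> F = {}" for E F
      using p that unfolding \<mu> pba_def by (simp add: sum.distrib[symmetric] distrib_left)
    show "0 \<le> \<mu> E" if "E \<in> A" for E
      using p a(1) that unfolding \<mu> pba_def by (auto intro!: sum_nonneg)
    show "\<mu> \<Omega> = 1" using p a(2) unfolding \<mu> pba_def by simp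
  qed
qed

lemma conv_sfI:
  fixes w :: "'v \<Rightarrow> real"
  assumes V: "finite V" "V \<noteq> {}" and w: "\<forall>v\<in>V. 0 \<le> w v" "(\<Sum>v\<in>V. w v) = 1"
    and p: "\<forall>v\<in>V. p v \<in> K"
  shows "(\<lambda>E. \<Sum>v\<in>V. w v * p v E) \<in> conv_sf K"
proof -
  obtain h where h: "bij_betw h {..<card V} V"
    using ex_bij_betw_nat_finite[OF V(1)] by (auto simp: atLeast0LessThan)
  have "(\<Sum>j<card V. w (h j)) = 1" using sum.reindex_bij_betw[OF h, of w] w(2) by simp
  moreover have "(\<lambda>E. \<Sum>v\<in>V. w v * p v E) = (\<lambda>E. \<Sum>j<card V. w (h j) * p (h j) E)"
    using sum.reindex_bij_betw[OF h, of "\<lambda>v. w v * p v _"] by simp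
  moreover have "\<forall>j<card V. 0 \<le> w (h j) \<and> p (h j) \<in> K"
    using bij_betwE[OF h] w(1) p by auto
  moreover have "0 < card V" using V by auto
  ultimately show ?thesis
    unfolding conv_sf_def
    by (intro CollectI exI[of _ "card V"] exI[of _ "\<lambda>j. w (h j)"] exI[of _ "\<lambda>j. p (h j)"]) simp
qed

lemma conv_sf_restrict_sfE:
  assumes "\<nu> \<in> conv_sf {restrict_sf A (\<tau> \<omega>) | \<omega>. \<omega> \<in> D}"
  obtains k :: nat and a \<omega> where "\<forall>j<k. 0 \<le> a j \<and> \<omega> j \<in> D" "(\<Sum>j<k. a j) = 1"
    "\<forall>F\<in>A. \<nu> F = (\<Sum>j<k. a j * \<tau> (\<omega> j) F)"
proof -
  obtain k :: nat and a p where a: "\<forall>j<k. 0 \<le> a j \<and> p j \<in> {restrict_sf A (\<tau> \<omega>) | \<omega>. \<omega> \<in> D}"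
    "(\<Sum>j<k. a j) = 1" and \<nu>: "\<nu> = (\<lambda>E. \<Sum>j<k. a j * p j E)"
    using assms unfolding conv_sf_def by blast
  have "\<forall>j. \<exists>\<omega>. j < k \<longrightarrow> \<omega> \<in> D \<and> p j = restrict_sf A (\<tau> \<omega>)" using a(1) by blast
  then obtain \<omega> where \<omega>: "\<forall>j<k. \<omega> j \<in> D \<and> p j = restrict_sf A (\<tau> (\<omega> j))"
    by (metis choice)
  show ?thesis
  proof (rule that[of k a \<omega>])
    show "\<forall>j<k. 0 \<le> a j \<and> \<omega> j \<in> D" using a(1) \<omega> by blast
    show "\<forall>F\<in>A. \<nu> F = (\<Sum>j<k. a j * \<tau> (\<omega> j) F)"
      using \<omega> unfolding \<nu> restrict_sf_def by simp
  qed (rule a(2))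
qed

section \<open>Trace fields\<close>

lemma algebra_trace_field:
  assumes "algebra \<Omega> A" "S \<subseteq> \<Omega>"
  shows "algebra S (trace_field A S)"
  unfolding algebra_iff_Int
proof (intro conjI ballI)
  interpret algebra \<Omega> A by fact
  show "trace_field A S \<subseteq> Pow S" "{} \<in> trace_field A S"
    unfolding trace_field_def by auto
  fix H H' assume "H \<in> trace_field A S" "H' \<in> trace_field A S"
  then obtain F F' where "F \<in> A" "H = F \<inter> S" "F' \<in> A" "H' = F' \<inter> S"
    unfolding trace_field_def by blast
  moreover have "S - F \<inter> S = (\<Omega> - F) \<inter> S" "F \<inter> S \<inter> (F' \<inter> S) = (F \<inter> F') \<inter> S"
    using assms(2) by auto
  ultimately show "S - H \<in> trace_field A S" "H \<inter> H' \<in> trace_field A S"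
    unfolding trace_field_def by blast+
qed

lemma restrict_sf_apply: "E \<in> A \<Longrightarrow> restrict_sf A g E = g E"
  unfolding restrict_sf_def by simp

definition trace_lift :: "'w set set \<Rightarrow> 'w set \<Rightarrow> ('w set \<Rightarrow> real) \<Rightarrow> 'w set \<Rightarrow> real" where
  "trace_lift A S Q F = (if F \<in> A then Q (F \<inter> S) else 0)"

lemma trace_lift_pba:
  assumes alg: "algebra \<Omega> A" and S: "S \<subseteq> \<Omega>" and Q: "Q \<in> pba S (trace_field A S)"
  shows "trace_lift A S Q \<in> pba \<Omega> A"
proof -
  interpret algebra \<Omega> A by fact
  interpret Q: fa_probability S "trace_field A S" Q
    using algebra_trace_field[OF alg S] Q by (rule fa_probabilityI)
  have tr: "F \<inter> S \<in> trace_field A S" if "F \<in> A" for F using that unfolding trace_field_def by blast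
  show ?thesis unfolding pba_def
  proof (intro CollectI conjI allI impI ballI)
    fix F G assume FG: "F \<in> A" "G \<in> A" "F \<inter> G = {}"
    moreover have "(F \<union> G) \<inter> S = F \<inter> S \<union> G \<inter> S" "F \<inter> S \<inter> (G \<inter> S) = {}" using FG(3) by blast+
    ultimately show "trace_lift A S Q (F \<union> G) = trace_lift A S Q F + trace_lift A S Q G"
      unfolding trace_lift_def using Q.prob_additive[OF tr tr] Un by simp
  next
    have "\<Omega> \<inter> S = S" using S by blast
    then show "trace_lift A S Q \<Omega> = 1" unfolding trace_lift_def using Q.prob_space_1 by simp
  next
    show "0 \<le> trace_lift A S Q F" if "F \<in> A" for F
      unfolding trace_lift_def using Q.prob_nonneg[OF tr[OF that]] by simp
  qed (simp add: trace_lift_def)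
qed

lemma Inf_trace_lift:
  assumes alg: "algebra \<Omega> A" and S: "S \<subseteq> \<Omega>" and Q: "Q \<in> pba S (trace_field A S)"
  shows "Inf {trace_lift A S Q F | F. F \<in> A \<and> S \<subseteq> F} = 1"
proof -
  interpret Q: fa_probability S "trace_field A S" Q
    using algebra_trace_field[OF alg S] Q by (rule fa_probabilityI)
  have one: "trace_lift A S Q F = 1" if "F \<in> A" "S \<subseteq> F" for F
    using that Q.prob_space_1 Int_absorb1[OF that(2)] unfolding trace_lift_def by simp
  then show ?thesis
  proof (intro cInf_eq_minimum)
    show "1 \<in> {trace_lift A S Q F | F. F \<in> A \<and> S \<subseteq> F}"
      unfolding mem_Collect_eq using algebra.top[OF alg] S one by (intro exI[of _ \<Omega>]) simp
  qed auto
qed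

text \<open>Only meaningful when P F depends on F \<inter> S alone (trace_sf_Int); the induced types
  are of this form (restrict_induced_t).\<close>
definition trace_sf :: "'w set set \<Rightarrow> 'w set \<Rightarrow> ('w set \<Rightarrow> real) \<Rightarrow> 'w set \<Rightarrow> real" where
  "trace_sf A S P H = (if H \<in> trace_field A S then P (SOME F. F \<in> A \<and> H = F \<inter> S) else 0)"

lemma restrict_induced_t: "restrict_sf (trace_field A S) (induced_t A S t i \<omega>) = trace_sf A S (t i \<omega>)"
  unfolding restrict_sf_def induced_t_def trace_sf_def by simp

lemma trace_sf_Int:
  assumes "F \<in> A" and invariant: "\<And>F'. F' \<in> A \<Longrightarrow> F' \<inter> S = F \<inter> S \<Longrightarrow> P F' = P F"
  shows "trace_sf A S P (F \<inter> S) = P F"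
proof -
  define F' where "F' = (SOME F'. F' \<in> A \<and> F \<inter> S = F' \<inter> S)"
  have "\<exists>F'. F' \<in> A \<and> F \<inter> S = F' \<inter> S" using assms(1) by blast
  then have "F' \<in> A \<and> F \<inter> S = F' \<inter> S" unfolding F'_def by (rule someI_ex)
  then have "P F' = P F" by (intro invariant) auto
  moreover have "F \<inter> S \<in> trace_field A S" using assms(1) unfolding trace_field_def by blast
  ultimately show ?thesis unfolding trace_sf_def F'_def by simp
qed

lemma trace_sf_pba:
  assumes alg: "algebra \<Omega> A" and S: "S \<subseteq> \<Omega>" and P: "P \<in> pba \<Omega> A"
    and invariant: "\<And>F F'. F \<in> A \<Longrightarrow> F' \<in> A \<Longrightarrow> F' \<inter> S = F \<inter> S \<Longrightarrow> P F' = P F"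
  shows "trace_sf A S P \<in> pba S (trace_field A S)"
proof -
  interpret fa_probability \<Omega> A P using alg P by (rule fa_probabilityI)
  have val: "trace_sf A S P (F \<inter> S) = P F" if "F \<in> A" for F
    by (rule trace_sf_Int[OF that]) (rule invariant[OF that], assumption+)
  show ?thesis unfolding pba_def
  proof (intro CollectI conjI allI impI ballI)
    fix H assume "H \<notin> trace_field A S"
    then show "trace_sf A S P H = 0" unfolding trace_sf_def by simp
  next
    fix H H' assume "H \<in> trace_field A S" "H' \<in> trace_field A S" and disj: "H \<inter> H' = {}"
    then obtain F F' where F: "F \<in> A" "H = F \<inter> S" "F' \<in> A" "H' = F' \<inter> S"
      unfolding trace_field_def by blast
    have "(F' \<inter> F) \<inter> S = {} \<inter> S" "F' \<inter> F \<in> A" using F disj by blast+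
    then have "P (F' \<inter> F) = 0" using invariant[of "{}" "F' \<inter> F"] prob_empty by simp
    moreover have "P (F \<union> (F' - F)) = P F + P (F' - F)" using prob_additive[of F "F' - F"] F by auto
    moreover have "F \<union> (F' - F) = F \<union> F'" by blast
    ultimately have "P (F \<union> F') = P F + P F'" using prob_Int_Diff[of F' F] F by simp
    moreover have "H \<union> H' = (F \<union> F') \<inter> S" using F by blast
    ultimately show "trace_sf A S P (H \<union> H') = trace_sf A S P H + trace_sf A S P H'"
      using val[of "F \<union> F'"] val[of F] val[of F'] F Un[of F F'] by simp
  next
    fix H assume "H \<in> trace_field A S"
    then obtain F where "F \<in> A" "H = F \<inter> S" unfolding trace_field_def by blast
    then show "0 \<le> trace_sf A S P H" using val prob_nonneg by simp
  next
    have "\<Omega> \<inter> S = S" using S by blast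
    then show "trace_sf A S P S = 1" using val[of \<Omega>] prob_space_1 by simp
  qed
qed

lemma trace_sf_restrict_sf: "trace_sf A S (restrict_sf A g) = trace_sf A S g"
proof -
  have "(SOME F. F \<in> A \<and> H = F \<inter> S) \<in> A" if "H \<in> trace_field A S" for H
  proof -
    have "\<exists>F. F \<in> A \<and> H = F \<inter> S" using that unfolding trace_field_def by blast
    from someI_ex[OF this] show ?thesis by blast
  qed
  then show ?thesis unfolding trace_sf_def restrict_sf_def by (simp add: fun_eq_iff)
qed

locale type_structure =
  fixes \<Omega> :: "'w set" and A :: "'w set set" and N :: "'i set"
    and M :: "'i \<Rightarrow> 'w set set" and t :: "'i \<Rightarrow> 'w \<Rightarrow> 'w set \<Rightarrow> real"
  assumes type_space: "type_space \<Omega> A N M t"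
begin

lemma algebra_A: "algebra \<Omega> A"
  using type_space unfolding type_space_def by blast

sublocale algebra \<Omega> A by (rule algebra_A)

lemma algebra_M: "i \<in> N \<Longrightarrow> algebra \<Omega> (M i)"
  using type_space unfolding type_space_def by blast

lemma M_subset_A: "i \<in> N \<Longrightarrow> M i \<subseteq> A"
  using type_space unfolding type_space_def by blast

lemma type_pba: "i \<in> N \<Longrightarrow> \<omega> \<in> \<Omega> \<Longrightarrow> restrict_sf A (t i \<omega>) \<in> pba \<Omega> A"
  using type_space unfolding type_space_def by blast

lemma type_Bfun: "i \<in> N \<Longrightarrow> E \<in> A \<Longrightarrow> (\<lambda>\<omega>. t i \<omega> E) \<in> Bfun \<Omega> (M i)"
  using type_space unfolding type_space_def by blast

lemma type_certain: "i \<in> N \<Longrightarrow> E \<in> M i \<Longrightarrow> \<omega> \<in> E \<Longrightarrow> t i \<omega> E = 1"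
  using type_space unfolding type_space_def by blast

lemma type_fa_probability: "i \<in> N \<Longrightarrow> \<omega> \<in> \<Omega> \<Longrightarrow> fa_probability \<Omega> A (restrict_sf A (t i \<omega>))"
  by (intro fa_probabilityI algebra_A type_pba)

abbreviation types :: "'i \<Rightarrow> ('w set \<Rightarrow> real) set" where
  "types i \<equiv> {restrict_sf A (t i \<omega>) | \<omega>. \<omega> \<in> \<Omega>}"

lemma Pi_set_eq: "i \<in> N \<Longrightarrow> Pi_set \<Omega> A t i = pba \<Omega> A \<inter> setwise_closure A (conv_sf (types i))"
  unfolding Pi_set_def using type_pba
  by (intro wstar_closure_pba_eq algebra_A conv_sf_subset_pba) blast

lemma type_Int_M:
  assumes i: "i \<in> N" and \<omega>: "\<omega> \<in> \<Omega>" and C: "C \<in> M i" and Y: "Y \<in> A"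
  shows "t i \<omega> (Y \<inter> C) = (if \<omega> \<in> C then t i \<omega> Y else 0)"
proof -
  interpret \<tau>: fa_probability \<Omega> A "restrict_sf A (t i \<omega>)" using type_fa_probability[OF i \<omega>] .
  have CA: "C \<in> A" using C M_subset_A[OF i] by blast
  show ?thesis
  proof (cases "\<omega> \<in> C")
    case True
    then show ?thesis
      using \<tau>.prob_Int_certain[OF CA _ Y] type_certain[OF i C] CA Y Int[OF Y CA]
      by (simp add: restrict_sf_apply)
  next
    case False
    have "\<Omega> - C \<in> M i" using C algebra.compl_sets[OF algebra_M[OF i]] by blast
    then have "t i \<omega> (\<Omega> - C) = 1" using type_certain[OF i] \<omega> False by blast
    then have "t i \<omega> C = 0" using \<tau>.prob_compl[OF CA] CA compl_sets[OF CA] by (simp add: restrict_sf_apply)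
    then show ?thesis
      using \<tau>.prob_Int_null[OF CA _ Y] CA Y Int[OF Y CA] False by (simp add: restrict_sf_apply)
  qed
qed

lemma type_M:
  assumes "i \<in> N" "\<omega> \<in> \<Omega>" "C \<in> M i"
  shows "t i \<omega> C = indicator C \<omega>"
proof -
  have "C \<in> A" using assms M_subset_A by blast
  then have "\<Omega> \<inter> C = C" by simp
  moreover have "t i \<omega> \<Omega> = 1"
    using fa_probability.prob_space_1[OF type_fa_probability[OF assms(1,2)]] by (simp add: restrict_sf_apply)
  ultimately show ?thesis using type_Int_M[OF assms top] by simp
qed

lemma convex_type_lower_bound:
  assumes i: "i \<in> N" and E: "E \<in> A" and W: "W \<in> M i" and a: "0 \<le> a"
    and bound: "\<forall>x\<in>W. a \<le> t i x E" and \<nu>: "\<nu> \<in> conv_sf (types i)"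
  shows "a * \<nu> W \<le> \<nu> E"
proof -
  obtain k :: nat and c \<omega> where c: "\<forall>j<k. 0 \<le> c j \<and> \<omega> j \<in> \<Omega>" and "(\<Sum>j<k. c j) = 1"
    and \<nu>_eq: "\<forall>F\<in>A. \<nu> F = (\<Sum>j<k. c j * t i (\<omega> j) F)"
    by (rule conv_sf_restrict_sfE[OF \<nu>])
  have WA: "W \<in> A" using W M_subset_A[OF i] by blast
  have "a * t i (\<omega> j) W \<le> t i (\<omega> j) E" if j: "j < k" for j
  proof -
    have \<omega>j: "\<omega> j \<in> \<Omega>" using c j by blast
    interpret \<tau>: fa_probability \<Omega> A "restrict_sf A (t i (\<omega> j))" using type_fa_probability[OF i \<omega>j] .
    have "t i (\<omega> j) W = indicator W (\<omega> j)" by (rule type_M[OF i \<omega>j W])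
    moreover have "0 \<le> t i (\<omega> j) E" using \<tau>.prob_nonneg[OF E] E by (simp add: restrict_sf_apply)
    ultimately show ?thesis using bound a by (cases "\<omega> j \<in> W") auto
  qed
  then have "(\<Sum>j<k. c j * (a * t i (\<omega> j) W)) \<le> (\<Sum>j<k. c j * t i (\<omega> j) E)"
    using c by (intro sum_mono mult_left_mono) auto
  then show ?thesis
    using \<nu>_eq WA E by (simp add: sum_distrib_left mult.left_commute)
qed

lemma Pi_set_lower_bound:
  assumes "i \<in> N" "E \<in> A" "W \<in> M i" "0 \<le> a" "\<forall>x\<in>W. a \<le> t i x E" "P \<in> Pi_set \<Omega> A t i"
  shows "a * P W \<le> P E"
  using assms M_subset_A convex_type_lower_bound
  by (intro setwise_closure_le[of P A "conv_sf (types i)"]) (auto simp: Pi_set_eq)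

lemma type_oscillation_cells:
  assumes i: "i \<in> N" and H: "finite H" "H \<subseteq> A" and Y: "Y \<subseteq> \<Omega>" and \<delta>: "0 < \<delta>"
  obtains \<C> x where "finite \<C>" "\<C> \<subseteq> M i" "disjoint \<C>" "Y \<subseteq> \<Union>\<C>" "\<forall>C\<in>\<C>. x C \<in> C \<inter> Y"
    "\<forall>C\<in>\<C>. \<forall>y\<in>C. \<forall>h\<in>H. \<bar>t i y h - t i (x C) h\<bar> \<le> \<delta>"
proof -
  interpret Mi: algebra \<Omega> "M i" using algebra_M[OF i] .
  have "\<forall>h\<in>H. (\<lambda>\<omega>. t i \<omega> h) \<in> Bfun \<Omega> (M i)" using type_Bfun[OF i] H(2) by blast
  then obtain \<C>0 where \<C>0: "finite \<C>0" "\<C>0 \<subseteq> M i" "disjoint \<C>0" "\<Union>\<C>0 = \<Omega>"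
      and osc: "\<forall>C\<in>\<C>0. \<forall>x\<in>C. \<forall>y\<in>C. \<forall>h\<in>H. \<bar>t i x h - t i y h\<bar> < \<delta>"
    by (rule Mi.Bfun_oscillation_partition[OF H(1) _ \<delta>])
  define \<C> where "\<C> = {C \<in> \<C>0. C \<inter> Y \<noteq> {}}"
  define x where "x C = (SOME y. y \<in> C \<inter> Y)" for C
  have x: "\<forall>C\<in>\<C>. x C \<in> C \<inter> Y"
  proof
    fix C assume "C \<in> \<C>"
    then have "\<exists>y. y \<in> C \<inter> Y" unfolding \<C>_def by blast
    then show "x C \<in> C \<inter> Y" unfolding x_def by (rule someI_ex)
  qed
  show ?thesis
  proof (rule that[of \<C> x])
    show "finite \<C>" "\<C> \<subseteq> M i" "disjoint \<C>"
      using \<C>0 pairwise_subset[of disjnt \<C>0 \<C>] unfolding \<C>_def by auto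
    show "Y \<subseteq> \<Union>\<C>" using \<C>0(4) Y unfolding \<C>_def by blast
    show "\<forall>C\<in>\<C>. \<forall>y\<in>C. \<forall>h\<in>H. \<bar>t i y h - t i (x C) h\<bar> \<le> \<delta>"
    proof (intro ballI)
      fix C y h assume "C \<in> \<C>" "y \<in> C" "h \<in> H"
      moreover have "x C \<in> C" using x \<open>C \<in> \<C>\<close> by blast
      ultimately show "\<bar>t i y h - t i (x C) h\<bar> \<le> \<delta>"
        using osc unfolding \<C>_def by (auto intro: less_imp_le)
    qed
  qed (rule x)
qed

text \<open>Each type is certain of its own M i-cell, so only types at points of C contribute, and
  these are \<delta>-close to the type at x, which is certain of E.\<close>
lemma convex_type_cell_estimate:
  assumes i: "i \<in> N" and C: "C \<in> M i" and x: "x \<in> C" and G: "G \<in> A" and E: "E \<in> A"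
    and certain: "t i x E = 1"
    and osc: "\<forall>y\<in>C. \<bar>t i y E - t i x E\<bar> \<le> \<delta> \<and> \<bar>t i y G - t i x G\<bar> \<le> \<delta>"
    and c: "\<forall>j<k. 0 \<le> c j \<and> \<omega> j \<in> \<Omega>"
    and \<nu>: "\<forall>F\<in>A. \<nu> F = (\<Sum>j<k. c j * t i (\<omega> j) F)"
  shows "\<bar>\<nu> (G \<inter> E \<inter> C) - \<nu> (E \<inter> C) * t i x G\<bar> \<le> 2 * \<delta> * \<nu> C"
proof -
  have CA: "C \<in> A" using C M_subset_A[OF i] by blast
  have x\<Omega>: "x \<in> \<Omega>" using x CA sets_into_space by blast
  interpret \<tau>x: fa_probability \<Omega> A "restrict_sf A (t i x)" using type_fa_probability[OF i x\<Omega>] .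
  have r: "0 \<le> t i x G" "t i x G \<le> 1" using \<tau>x.prob_nonneg[OF G] \<tau>x.prob_le_1[OF G] G
    by (simp_all add: restrict_sf_apply)
  have summand: "\<bar>c j * t i (\<omega> j) (G \<inter> E \<inter> C) - c j * t i (\<omega> j) (E \<inter> C) * t i x G\<bar>
      \<le> 2 * \<delta> * (c j * t i (\<omega> j) C)" if j: "j < k" for j
  proof (cases "\<omega> j \<in> C")
    case True
    have \<omega>j: "\<omega> j \<in> \<Omega>" using c j by blast
    interpret \<tau>: fa_probability \<Omega> A "restrict_sf A (t i (\<omega> j))" using type_fa_probability[OF i \<omega>j] .
    have "\<bar>t i (\<omega> j) (G \<inter> E) - t i (\<omega> j) E * t i x G\<bar> \<le> \<bar>t i (\<omega> j) G - t i x G\<bar> + (1 - t i (\<omega> j) E)"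
      using \<tau>.prob_Int_approx[OF G E r] G E Int[OF G E] by (simp add: restrict_sf_apply)
    also have "\<dots> \<le> 2 * \<delta>" using osc True certain by (auto simp: abs_le_iff)
    finally have "c j * \<bar>t i (\<omega> j) (G \<inter> E) - t i (\<omega> j) E * t i x G\<bar> \<le> c j * (2 * \<delta>)"
      using c j by (intro mult_left_mono) auto
    moreover have "t i (\<omega> j) (G \<inter> E \<inter> C) = t i (\<omega> j) (G \<inter> E)" "t i (\<omega> j) (E \<inter> C) = t i (\<omega> j) E"
      "t i (\<omega> j) C = 1"
      using type_Int_M[OF i \<omega>j C] type_M[OF i \<omega>j C] True G E Int[OF G E] by simp_all
    moreover have "\<bar>c j * t i (\<omega> j) (G \<inter> E) - c j * t i (\<omega> j) E * t i x G\<bar>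
        = c j * \<bar>t i (\<omega> j) (G \<inter> E) - t i (\<omega> j) E * t i x G\<bar>"
    proof -
      have "c j * t i (\<omega> j) (G \<inter> E) - c j * t i (\<omega> j) E * t i x G
          = c j * (t i (\<omega> j) (G \<inter> E) - t i (\<omega> j) E * t i x G)" by (simp add: algebra_simps)
      then show ?thesis using c j by (simp add: abs_mult)
    qed
    ultimately show ?thesis by (simp add: mult.commute)
  next
    case False
    then show ?thesis using c j type_Int_M[OF i _ C] type_M[OF i _ C] G E Int[OF G E] by simp
  qed
  have "\<nu> (G \<inter> E \<inter> C) - \<nu> (E \<inter> C) * t i x G
      = (\<Sum>j<k. c j * t i (\<omega> j) (G \<inter> E \<inter> C) - c j * t i (\<omega> j) (E \<inter> C) * t i x G)"
  proof -
    have "G \<inter> E \<inter> C \<in> A" "E \<inter> C \<in> A" using G E CA by auto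
    then show ?thesis using \<nu> by (simp add: sum_subtractf sum_distrib_right)
  qed
  also have "\<bar>\<dots>\<bar> \<le> (\<Sum>j<k. 2 * \<delta> * (c j * t i (\<omega> j) C))"
    using summand by (intro order.trans[OF sum_abs] sum_mono) auto
  also have "\<dots> = 2 * \<delta> * \<nu> C" using \<nu> CA by (simp add: sum_distrib_left)
  finally show ?thesis .
qed

end

section \<open>Common certainty components\<close>

locale common_certainty = type_structure +
  fixes I S E
  assumes I_subset: "I \<subseteq> N" and S_subset: "S \<subseteq> \<Omega>"
    and E_in: "E \<in> A" and E_subset: "E \<subseteq> S"
    and E_certain: "\<And>i \<omega>. i \<in> I \<Longrightarrow> \<omega> \<in> S \<Longrightarrow> t i \<omega> E = 1"
begin

lemma type_Int_E:
  assumes "i \<in> I" "\<omega> \<in> S" "F \<in> A"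
  shows "t i \<omega> (F \<inter> E) = t i \<omega> F"
proof -
  have "i \<in> N" "\<omega> \<in> \<Omega>" using assms I_subset S_subset by auto
  then interpret \<tau>: fa_probability \<Omega> A "restrict_sf A (t i \<omega>)" by (rule type_fa_probability)
  show ?thesis
    using \<tau>.prob_Int_certain[OF E_in _ assms(3)] E_certain[OF assms(1,2)] assms(3) E_in
      Int[OF assms(3) E_in] by (simp add: restrict_sf_apply)
qed

lemma type_trace_invariant:
  assumes "i \<in> I" "\<omega> \<in> S" "F \<in> A" "F' \<in> A" "F' \<inter> S = F \<inter> S"
  shows "t i \<omega> F' = t i \<omega> F"
proof -
  have "F' \<inter> E = F \<inter> E" using assms(5) E_subset by blast
  then show ?thesis using type_Int_E[of i \<omega> F'] type_Int_E[of i \<omega> F] assms by simp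
qed

abbreviation induced_types where
  "induced_types i \<equiv> {restrict_sf (trace_field A S) (induced_t A S t i \<omega>) | \<omega>. \<omega> \<in> S}"

lemma induced_type_Int:
  assumes "i \<in> I" "\<omega> \<in> S" "F \<in> A"
  shows "restrict_sf (trace_field A S) (induced_t A S t i \<omega>) (F \<inter> S) = t i \<omega> F"
  unfolding restrict_induced_t
  by (rule trace_sf_Int[where P = "t i \<omega>", OF assms(3) type_trace_invariant[OF assms]])

lemma induced_type_pba:
  assumes "i \<in> I" "\<omega> \<in> S"
  shows "restrict_sf (trace_field A S) (induced_t A S t i \<omega>) \<in> pba S (trace_field A S)"
proof -
  have "i \<in> N" "\<omega> \<in> \<Omega>" using assms I_subset S_subset by auto
  moreover have "restrict_sf A (t i \<omega>) F' = restrict_sf A (t i \<omega>) F"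
    if "F \<in> A" "F' \<in> A" "F' \<inter> S = F \<inter> S" for F F'
    using type_trace_invariant[OF assms that] that by (simp add: restrict_sf_apply)
  ultimately have "trace_sf A S (restrict_sf A (t i \<omega>)) \<in> pba S (trace_field A S)"
    using trace_sf_pba[OF algebra_A S_subset type_pba] by blast
  then show ?thesis unfolding restrict_induced_t trace_sf_restrict_sf .
qed

lemma induced_Pi_set_eq:
  "i \<in> I \<Longrightarrow> Pi_set S (trace_field A S) (induced_t A S t) i
    = pba S (trace_field A S) \<inter> setwise_closure (trace_field A S) (conv_sf (induced_types i))"
  unfolding Pi_set_def using induced_type_pba
  by (intro wstar_closure_pba_eq[OF algebra_trace_field[OF algebra_A S_subset]] conv_sf_subset_pba) blast

lemma trace_lift_in_Pi_set:
  assumes i: "i \<in> I" and Q: "Q \<in> Pi_set S (trace_field A S) (induced_t A S t) i"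
  shows "trace_lift A S Q \<in> Pi_set \<Omega> A t i"
proof -
  have iN: "i \<in> N" using i I_subset by blast
  have Qpba: "Q \<in> pba S (trace_field A S)"
    and Qcl: "Q \<in> setwise_closure (trace_field A S) (conv_sf (induced_types i))"
    using Q induced_Pi_set_eq[OF i] by auto
  have "trace_lift A S Q \<in> setwise_closure A (conv_sf (types i))"
  proof (rule setwise_closureI)
    fix \<G> :: "'a set set" and \<epsilon> :: real assume \<G>: "finite \<G>" "\<G> \<subseteq> A" and \<epsilon>: "0 < \<epsilon>"
    have "(\<lambda>G. G \<inter> S) ` \<G> \<subseteq> trace_field A S" using \<G>(2) unfolding trace_field_def by blast
    then obtain \<nu>' where \<nu>': "\<nu>' \<in> conv_sf (induced_types i)"
        "\<forall>G\<in>\<G>. \<bar>\<nu>' (G \<inter> S) - Q (G \<inter> S)\<bar> < \<epsilon>"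
      using setwise_closureD[OF Qcl _ _ \<epsilon>] \<G>(1) by (metis (no_types, lifting) finite_imageI image_eqI)
    obtain k :: nat and c \<omega> where c: "\<forall>j<k. 0 \<le> c j \<and> \<omega> j \<in> S" "(\<Sum>j<k. c j) = 1"
      and \<nu>'_eq: "\<forall>H\<in>trace_field A S. \<nu>' H = (\<Sum>j<k. c j * induced_t A S t i (\<omega> j) H)"
      by (rule conv_sf_restrict_sfE[OF \<nu>'(1)])
    define \<nu> where "\<nu> = (\<lambda>F. \<Sum>j\<in>{..<k}. c j * restrict_sf A (t i (\<omega> j)) F)"
    have "\<nu> \<in> conv_sf (types i)"
      unfolding \<nu>_def using c S_subset by (intro conv_sfI) (auto intro!: Nat.gr0I)
    moreover have "\<bar>\<nu> G - trace_lift A S Q G\<bar> < \<epsilon>" if G: "G \<in> \<G>" for G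
    proof -
      have GA: "G \<in> A" using G \<G>(2) by blast
      then have "G \<inter> S \<in> trace_field A S" unfolding trace_field_def by blast
      then have "\<nu>' (G \<inter> S) = (\<Sum>j<k. c j * t i (\<omega> j) G)"
        using \<nu>'_eq induced_type_Int[OF i _ GA] c(1) by (simp add: restrict_sf_apply)
      moreover have "\<nu> G = (\<Sum>j<k. c j * t i (\<omega> j) G)"
        unfolding \<nu>_def using GA by (simp add: restrict_sf_apply)
      ultimately show ?thesis using \<nu>'(2)[rule_format, OF G] GA unfolding trace_lift_def by simp
    qed
    ultimately show "\<exists>\<nu>\<in>conv_sf (types i). \<forall>G\<in>\<G>. \<bar>\<nu> G - trace_lift A S Q G\<bar> < \<epsilon>" by blast
  qed
  then show ?thesis
    using Pi_set_eq[OF iN] trace_lift_pba[OF algebra_A S_subset Qpba] by blast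
qed

lemma trace_lift_witness:
  assumes "Q \<in> pba S (trace_field A S)" "\<forall>i\<in>I. Q \<in> Pi_set S (trace_field A S) (induced_t A S t) i"
  shows "\<exists>P\<in>pba \<Omega> A. (\<forall>i\<in>I. P \<in> Pi_set \<Omega> A t i) \<and> 0 < Inf {P F | F. F \<in> A \<and> S \<subseteq> F}"
  using assms trace_lift_pba[OF algebra_A S_subset] trace_lift_in_Pi_set Inf_trace_lift[OF algebra_A S_subset]
  by (intro bexI[of _ "trace_lift A S Q"]) auto

lemma certain_event_pos:
  assumes i: "i \<in> I" and P: "P \<in> Pi_set \<Omega> A t i" and Inf: "0 < Inf {P F | F. F \<in> A \<and> S \<subseteq> F}"
  shows "0 < P E"
proof -
  have iN: "i \<in> N" using i I_subset by blast
  interpret Mi: algebra \<Omega> "M i" using algebra_M[OF iN] .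
  obtain W where W: "W \<in> M i" "{x\<in>\<Omega>. 1 \<le> t i x E} \<subseteq> W" "W \<subseteq> {x\<in>\<Omega>. 1 / 2 < t i x E}"
    using Mi.Bfun_level_set_between[OF type_Bfun[OF iN E_in], of "1 / 2" 1] by auto
  have WA: "W \<in> A" using W(1) M_subset_A[OF iN] by blast
  have "S \<subseteq> W" using W(2) E_certain[OF i] S_subset by auto
  have "1 / 2 * P W \<le> P E"
    using W(3) by (intro Pi_set_lower_bound[OF iN E_in W(1) _ _ P]) auto
  moreover have "Inf {P F | F. F \<in> A \<and> S \<subseteq> F} \<le> P W"
  proof (rule cInf_lower)
    show "P W \<in> {P F | F. F \<in> A \<and> S \<subseteq> F}" using WA \<open>S \<subseteq> W\<close> by blast
    have "P \<in> pba \<Omega> A" using P Pi_set_eq[OF iN] by blast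
    then show "bdd_below {P F | F. F \<in> A \<and> S \<subseteq> F}"
      unfolding pba_def by (intro bdd_belowI[of _ 0]) auto
  qed
  ultimately show ?thesis using Inf by linarith
qed

lemma Pi_set_cell_estimate:
  assumes i: "i \<in> I" and P: "P \<in> Pi_set \<Omega> A t i"
    and \<C>: "finite \<C>" "\<C> \<subseteq> M i" "disjoint \<C>" and x: "\<forall>C\<in>\<C>. x C \<in> C \<inter> E"
    and \<G>: "finite \<G>" "\<G> \<subseteq> A"
    and \<delta>: "0 \<le> \<delta>" and osc: "\<forall>C\<in>\<C>. \<forall>y\<in>C. \<forall>h\<in>insert E \<G>. \<bar>t i y h - t i (x C) h\<bar> \<le> \<delta>"
    and \<eta>: "0 < \<eta>" and G: "G \<in> \<G>"
  shows "(\<Sum>C\<in>\<C>. \<bar>P (G \<inter> E \<inter> C) - P (E \<inter> C) * t i (x C) G\<bar>) \<le> \<eta> + 2 * \<delta>"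
proof -
  have iN: "i \<in> N" using i I_subset by blast
  have \<C>A: "\<C> \<subseteq> A" using \<C>(2) M_subset_A[OF iN] by blast
  have GA: "G \<in> A" using G \<G>(2) by blast
  define \<epsilon> where "\<epsilon> = \<eta> / (2 * (real (card \<C>) + 1))"
  have \<epsilon>: "0 < \<epsilon>" "2 * \<epsilon> * real (card \<C>) \<le> \<eta>"
    using \<eta> by (simp_all add: \<epsilon>_def field_simps)
  define \<G>1 where "\<G>1 = (\<lambda>C. G \<inter> E \<inter> C) ` \<C> \<union> (\<lambda>C. E \<inter> C) ` \<C>"
  have "finite \<G>1" "\<G>1 \<subseteq> A" unfolding \<G>1_def using \<C>(1) \<C>A GA E_in by auto
  then obtain \<nu> where \<nu>: "\<nu> \<in> conv_sf (types i)" "\<forall>Y\<in>\<G>1. \<bar>\<nu> Y - P Y\<bar> < \<epsilon>"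
    using setwise_closureD[of P A "conv_sf (types i)"] P Pi_set_eq[OF iN] \<epsilon>(1) by blast
  obtain k :: nat and c \<omega> where c: "\<forall>j<k. 0 \<le> c j \<and> \<omega> j \<in> \<Omega>" "(\<Sum>j<k. c j) = 1"
    and \<nu>_eq: "\<forall>F\<in>A. \<nu> F = (\<Sum>j<k. c j * t i (\<omega> j) F)"
    by (rule conv_sf_restrict_sfE[OF \<nu>(1)])
  interpret \<nu>: fa_probability \<Omega> A \<nu>
    using \<nu>(1) conv_sf_subset_pba[of "types i"] type_pba[OF iN] by (intro fa_probabilityI algebra_A) blast
  have cell: "\<bar>P (G \<inter> E \<inter> C) - P (E \<inter> C) * t i (x C) G\<bar> \<le> 2 * \<epsilon> + 2 * \<delta> * \<nu> C" if C: "C \<in> \<C>" for C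
  proof -
    have xC: "x C \<in> C" "x C \<in> E" and CM: "C \<in> M i" using x C \<C>(2) by auto
    have x\<Omega>: "x C \<in> \<Omega>" using xC E_subset S_subset by blast
    interpret \<tau>: fa_probability \<Omega> A "restrict_sf A (t i (x C))" using type_fa_probability[OF iN x\<Omega>] .
    have r: "0 \<le> t i (x C) G" "t i (x C) G \<le> 1"
      using \<tau>.prob_nonneg[OF GA] \<tau>.prob_le_1[OF GA] GA by (simp_all add: restrict_sf_apply)
    have "\<bar>\<nu> (G \<inter> E \<inter> C) - \<nu> (E \<inter> C) * t i (x C) G\<bar> \<le> 2 * \<delta> * \<nu> C"
      using osc C G E_certain[OF i] xC E_subset
      by (intro convex_type_cell_estimate[OF iN CM xC(1) GA E_in _ _ c(1) \<nu>_eq]) auto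
    moreover have "\<bar>\<nu> (G \<inter> E \<inter> C) - P (G \<inter> E \<inter> C)\<bar> < \<epsilon>" "\<bar>\<nu> (E \<inter> C) - P (E \<inter> C)\<bar> < \<epsilon>"
      using \<nu>(2) C unfolding \<G>1_def by auto
    moreover have "\<bar>\<nu> (E \<inter> C) * t i (x C) G - P (E \<inter> C) * t i (x C) G\<bar> \<le> \<epsilon>"
    proof -
      have "\<bar>\<nu> (E \<inter> C) - P (E \<inter> C)\<bar> * t i (x C) G \<le> \<epsilon> * 1"
        using calculation(3) r by (intro mult_mono) auto
      then show ?thesis using r by (simp add: abs_mult flip: left_diff_distrib)
    qed
    ultimately show ?thesis by (smt (verit))
  qed
  have "(\<Sum>C\<in>\<C>. \<bar>P (G \<inter> E \<inter> C) - P (E \<inter> C) * t i (x C) G\<bar>) \<le> (\<Sum>C\<in>\<C>. 2 * \<epsilon> + 2 * \<delta> * \<nu> C)"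
    using cell by (rule sum_mono)
  also have "\<dots> = 2 * \<epsilon> * real (card \<C>) + 2 * \<delta> * (\<Sum>C\<in>\<C>. \<nu> C)"
    by (simp add: sum.distrib sum_distrib_left)
  also have "\<dots> \<le> \<eta> + 2 * \<delta>"
    using \<epsilon>(2) mult_left_mono[OF \<nu>.sum_prob_disjoint_le_1[OF \<C>(1) \<C>A \<C>(3)], of "2 * \<delta>"] \<delta>
    by simp
  finally show ?thesis .
qed

text \<open>The approximant puts on a point of E in each cell the conditional probability of the
  cell given E.\<close>
lemma conditional_cell_approx:
  assumes i: "i \<in> I" and P: "P \<in> Pi_set \<Omega> A t i" and PE: "0 < P E"
    and \<G>: "finite \<G>" "\<G> \<subseteq> A" and \<epsilon>: "0 < \<epsilon>"
  obtains \<C> w x where "finite \<C>" "\<C> \<noteq> {}" "\<forall>C\<in>\<C>. 0 \<le> w C \<and> x C \<in> C \<inter> E" "(\<Sum>C\<in>\<C>. w C) = 1"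
    "\<forall>G\<in>\<G>. \<bar>(\<Sum>C\<in>\<C>. w C * t i (x C) G) - P (G \<inter> E) / P E\<bar> < \<epsilon>"
proof -
  have iN: "i \<in> N" using i I_subset by blast
  interpret fa_probability \<Omega> A P using P Pi_set_eq[OF iN] by (intro fa_probabilityI algebra_A) blast
  define \<delta> where "\<delta> = P E * \<epsilon> / 8"
  have \<delta>: "0 < \<delta>" using PE \<epsilon> by (simp add: \<delta>_def)
  have "finite (insert E \<G>)" "insert E \<G> \<subseteq> A" "E \<subseteq> \<Omega>" using \<G> E_in sets_into_space by auto
  then obtain \<C> x where \<C>: "finite \<C>" "\<C> \<subseteq> M i" "disjoint \<C>" and E_cover: "E \<subseteq> \<Union>\<C>"
      and x: "\<forall>C\<in>\<C>. x C \<in> C \<inter> E" and osc: "\<forall>C\<in>\<C>. \<forall>y\<in>C. \<forall>h\<in>insert E \<G>. \<bar>t i y h - t i (x C) h\<bar> \<le> \<delta>"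
    by (rule type_oscillation_cells[OF iN _ _ _ \<delta>])
  have \<C>A: "\<C> \<subseteq> A" using \<C>(2) M_subset_A[OF iN] by blast
  define w where "w C = P (E \<inter> C) / P E" for C
  have PE_sum: "P E = (\<Sum>C\<in>\<C>. P (E \<inter> C))" using prob_sum_disjoint[OF \<C>(1) \<C>A \<C>(3) E_in E_cover] .
  show ?thesis
  proof (rule that[of \<C> w x])
    show "\<C> \<noteq> {}" using PE_sum PE by auto
    have "0 \<le> w C" if "C \<in> \<C>" for C
      using prob_nonneg[OF Int[OF E_in]] \<C>A that PE unfolding w_def by auto
    then show "\<forall>C\<in>\<C>. 0 \<le> w C \<and> x C \<in> C \<inter> E" using x by blast
    show "(\<Sum>C\<in>\<C>. w C) = 1" using PE_sum PE unfolding w_def by (simp flip: sum_divide_distrib)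
    show "\<forall>G\<in>\<G>. \<bar>(\<Sum>C\<in>\<C>. w C * t i (x C) G) - P (G \<inter> E) / P E\<bar> < \<epsilon>"
    proof
      fix G assume G: "G \<in> \<G>"
      have sum_le: "(\<Sum>C\<in>\<C>. \<bar>P (G \<inter> E \<inter> C) - P (E \<inter> C) * t i (x C) G\<bar>) \<le> P E * \<epsilon> / 2 + 2 * \<delta>"
        using PE \<epsilon> \<delta> osc by (intro Pi_set_cell_estimate[OF i P \<C> x \<G> _ _ _ G]) auto
      have "\<bar>(\<Sum>C\<in>\<C>. w C * t i (x C) G) - P (G \<inter> E) / P E\<bar>
          \<le> (\<Sum>C\<in>\<C>. \<bar>P (G \<inter> E \<inter> C) - P (E \<inter> C) * t i (x C) G\<bar>) / P E"
        unfolding w_def using G \<G>(2) by (intro prob_conditional_sum_approx[OF \<C>(1) \<C>A \<C>(3) E_in E_cover PE]) auto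
      moreover have "(P E * \<epsilon> / 2 + 2 * \<delta>) / P E < \<epsilon>" using PE \<epsilon> by (simp add: \<delta>_def field_simps)
      ultimately show "\<bar>(\<Sum>C\<in>\<C>. w C * t i (x C) G) - P (G \<inter> E) / P E\<bar> < \<epsilon>"
        using divide_right_mono[OF sum_le, of "P E"] PE by linarith
    qed
  qed (rule \<C>(1))
qed

lemma conditional_in_induced_Pi_set:
  assumes i: "i \<in> I" and P: "P \<in> Pi_set \<Omega> A t i" and PE: "0 < P E"
  shows "trace_sf A S (cond_sf A P E) \<in> Pi_set S (trace_field A S) (induced_t A S t) i"
proof -
  have iN: "i \<in> N" using i I_subset by blast
  interpret fa_probability \<Omega> A P using P Pi_set_eq[OF iN] by (intro fa_probabilityI algebra_A) blast
  have invariant: "cond_sf A P E F' = cond_sf A P E F" if "F \<in> A" "F' \<in> A" "F' \<inter> S = F \<inter> S" for F F'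
  proof -
    have "F' \<inter> E = F \<inter> E" using that(3) E_subset by blast
    then show ?thesis using that unfolding cond_sf_def by simp
  qed
  have Q_pba: "trace_sf A S (cond_sf A P E) \<in> pba S (trace_field A S)"
    using trace_sf_pba[OF algebra_A S_subset cond_sf_pba[OF E_in PE]] invariant by blast
  have Q_eq: "trace_sf A S (cond_sf A P E) (F \<inter> S) = P (F \<inter> E) / P E" if "F \<in> A" for F
    using trace_sf_Int[where P = "cond_sf A P E", OF that invariant[OF that]] that
    unfolding cond_sf_def by simp
  have "trace_sf A S (cond_sf A P E) \<in> setwise_closure (trace_field A S) (conv_sf (induced_types i))"
  proof (rule setwise_closureI)
    fix \<H> \<epsilon> assume \<H>: "finite \<H>" "\<H> \<subseteq> trace_field A S" and \<epsilon>: "0 < (\<epsilon>::real)"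
    define rep where "rep H = (SOME F. F \<in> A \<and> H = F \<inter> S)" for H
    have rep: "rep H \<in> A" "H = rep H \<inter> S" if "H \<in> \<H>" for H
    proof -
      have "\<exists>F. F \<in> A \<and> H = F \<inter> S" using that \<H>(2) unfolding trace_field_def by blast
      then show "rep H \<in> A" "H = rep H \<inter> S" unfolding rep_def by (metis (mono_tags, lifting) someI_ex)+
    qed
    have "finite (rep ` \<H>)" "rep ` \<H> \<subseteq> A" using \<H>(1) rep(1) by auto
    then obtain \<C> w x where \<C>: "finite \<C>" "\<C> \<noteq> {}" "\<forall>C\<in>\<C>. 0 \<le> w C \<and> x C \<in> C \<inter> E"
        "(\<Sum>C\<in>\<C>. w C) = 1" and close: "\<forall>G\<in>rep ` \<H>. \<bar>(\<Sum>C\<in>\<C>. w C * t i (x C) G) - P (G \<inter> E) / P E\<bar> < \<epsilon>"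
      by (rule conditional_cell_approx[OF i P PE _ _ \<epsilon>])
    define \<nu> where "\<nu> = (\<lambda>H. \<Sum>C\<in>\<C>. w C * restrict_sf (trace_field A S) (induced_t A S t i (x C)) H)"
    have "\<nu> \<in> conv_sf (induced_types i)"
      unfolding \<nu>_def using \<C> E_subset by (intro conv_sfI) auto
    moreover have "\<bar>\<nu> H - trace_sf A S (cond_sf A P E) H\<bar> < \<epsilon>" if H: "H \<in> \<H>" for H
    proof -
      have "\<nu> H = (\<Sum>C\<in>\<C>. w C * t i (x C) (rep H))"
        unfolding \<nu>_def using induced_type_Int[OF i _ rep(1)[OF H]] rep(2)[OF H] \<C>(3) E_subset
        by (intro sum.cong refl) (metis IntE subsetD)
      moreover have "trace_sf A S (cond_sf A P E) H = P (rep H \<inter> E) / P E"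
        using Q_eq[OF rep(1)[OF H]] rep(2)[OF H] by simp
      ultimately show ?thesis using close H by simp
    qed
    ultimately show "\<exists>\<nu>\<in>conv_sf (induced_types i). \<forall>H\<in>\<H>. \<bar>\<nu> H - trace_sf A S (cond_sf A P E) H\<bar> < \<epsilon>"
      by blast
  qed
  then show ?thesis using induced_Pi_set_eq[OF i] Q_pba by blast
qed

lemma consistent_if_witness:
  assumes "P \<in> pba \<Omega> A" "\<forall>i\<in>I. P \<in> Pi_set \<Omega> A t i" "0 < Inf {P F | F. F \<in> A \<and> S \<subseteq> F}"
  shows "consistent S (trace_field A S) I (induced_t A S t)"
proof (cases "I = {}")
  case True
  then show ?thesis unfolding consistent_def by auto
next
  case False
  then obtain i where "i \<in> I" by blast
  then have "0 < P E" using assms certain_event_pos by blast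
  then have "\<forall>i\<in>I. trace_sf A S (cond_sf A P E) \<in> Pi_set S (trace_field A S) (induced_t A S t) i"
    using assms(2) conditional_in_induced_Pi_set by blast
  then show ?thesis unfolding consistent_def by blast
qed

lemma witness_if_consistent:
  assumes "finite I" "S \<noteq> {}" "consistent S (trace_field A S) I (induced_t A S t)"
  shows "\<exists>P\<in>pba \<Omega> A. (\<forall>i\<in>I. P \<in> Pi_set \<Omega> A t i) \<and> 0 < Inf {P F | F. F \<in> A \<and> S \<subseteq> F}"
proof -
  obtain Q where "Q \<in> pba S (trace_field A S)" "\<forall>i\<in>I. Q \<in> Pi_set S (trace_field A S) (induced_t A S t) i"
  proof (cases "I = {}")
    case True
    obtain \<omega> where "\<omega> \<in> S" using assms(2) by blast
    show ?thesis
      using True by (intro that[OF dirac_pba[OF algebra_trace_field[OF algebra_A S_subset] \<open>\<omega> \<in> S\<close>]]) simp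
  next
    case False
    then obtain i where "i \<in> I" by blast
    moreover have "(\<Inter>i\<in>I. Pi_set S (trace_field A S) (induced_t A S t) i) \<noteq> {}"
      using assms(3)[unfolded consistent_def, rule_format, of I] assms(1) by simp
    then obtain Q where "\<forall>i\<in>I. Q \<in> Pi_set S (trace_field A S) (induced_t A S t) i" by blast
    ultimately have "Q \<in> pba S (trace_field A S)" using induced_Pi_set_eq by blast
    then show ?thesis by (rule that) fact
  qed
  then show ?thesis by (rule trace_lift_witness)
qed

end

theorem proposition4:
  fixes \<Omega> :: "'w set" and A :: "'w set set" and N :: "'i set"
    and M :: "'i \<Rightarrow> 'w set set" and t :: "'i \<Rightarrow> 'w \<Rightarrow> 'w set \<Rightarrow> real"
  assumes "type_space \<Omega> A N M t"
  shows "universally_consistent \<Omega> A N t \<longleftrightarrow>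
    (\<forall>I S. finite I \<and> I \<subseteq> N \<and> common_certainty_component \<Omega> A t I S \<longrightarrow>
       consistent S (trace_field A S) I (induced_t A S t))"
proof -
  have "(\<exists>P\<in>pba \<Omega> A. (\<forall>i\<in>I. P \<in> Pi_set \<Omega> A t i) \<and> 0 < Inf {P F | F. F \<in> A \<and> S \<subseteq> F})
      \<longleftrightarrow> consistent S (trace_field A S) I (induced_t A S t)"
    if I: "finite I" "I \<subseteq> N" and S: "common_certainty_component \<Omega> A t I S" for I S
  proof -
    obtain E where "S \<noteq> {}" "S \<subseteq> \<Omega>" "E \<in> A" "E \<subseteq> S" "\<forall>\<omega>\<in>S. \<forall>i\<in>I. t i \<omega> E = 1"
      using S unfolding common_certainty_component_def by blast
    then interpret common_certainty \<Omega> A N M t I S E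
      using assms I(2) by unfold_locales auto
    show ?thesis using consistent_if_witness witness_if_consistent[OF I(1) \<open>S \<noteq> {}\<close>] by blast
  qed
  then show ?thesis unfolding universally_consistent_def by meson
qed

end
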